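(* There exists an injective $\mathbb C(q)$-algebra homomorphism $\theta:(U^0_{ev})^W\to R(\mathfrak g)$ such that $\theta\bigl(\sum_{\omega\in W}K^{\omega(\alpha)}\bigr)=\sum_{\omega\in W}e^{\omega(\alpha/2)}$ for all $\alpha\in Q\cap2\Lambda$. Moreover, the image of $\theta$ is the $\mathbb C(q)$-span of $\{\chi(L(\lambda)):\lambda\in\Psi\}$.
   Context: $\mathfrak g$ is a finite-dimensional simple complex Lie algebra with root lattice $Q$, weight lattice $\Lambda$, dominant integral weights $\Lambda^+$ and Weyl group $W$. $U^0$ is the group algebra of $Q$ over $\mathbb C(q)$ ($q$ an indeterminate) with basis $\{K^\alpha\}_{\alpha\in Q}$, $K^\alpha K^\beta=K^{\alpha+\beta}$, and $W$ acts by $\omega\cdot K^\alpha=K^{\omega(\alpha)}$; $U^0_{ev}=\bigoplus_{\alpha\in Q\cap 2\Lambda}\mathbb C(q)K^\alpha$ and $(U^0_{ev})^W$ its $W$-invariants. Let $\mathbb C(q)[\Lambda]$ be the group algebra of $\Lambda$ with basis $\{e^\mu\}_{\mu\in\Lambda}$. For $\lambda\in\Lambda^+$, $L(\lambda)$ is the irreducible finite-dimensional $\mathfrak g$-module of highest weight $\lambda$ and $\chi(L(\lambda))=\sum_\mu\dim L(\lambda)_\mu e^\mu$ its character. $R(\mathfrak g)=\mathbb C(q)\otimes_{\mathbb Z}r(\mathfrak g)$, where $r(\mathfrak g)$ is the representation (character) ring of $\mathfrak g$ with $\mathbb Z$-basis $\{\chi(L(\lambda)):\lambda\in\Lambda^+\}$;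 it is identified with the $\mathbb C(q)$-subalgebra of $\mathbb C(q)[\Lambda]$ spanned by these characters. $\Psi=\{\lambda\in\Lambda^+:2\lambda\in Q\}$. *)

theory Defs
  imports "HOL-Analysis.Analysis" "HOL-Library.Poly_Mapping"
    "HOL-Computational_Algebra.Polynomial" "HOL-Computational_Algebra.Fraction_Field"
begin

text \<open>The ground field C(q): rational functions in one indeterminate over the complex numbers.\<close>
type_synonym Cq = "complex poly fract"

text \<open>Ambient Euclidean space V = real^'n carrying the root system; the group algebra
  C(q)[V] (finitely supported functions V to C(q), convolution product) contains both
  U^0 = C(q)[Q] (with K^alpha = single alpha 1) and C(q)[Lambda] (with e^mu = single mu 1).\<close>
type_synonym 'n gring = "(real^'n::finite) \<Rightarrow>\<^sub>0 Cq"

definition gexp :: "real^'n::finite \<Rightarrow> 'n gring" where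
  "gexp mu = Poly_Mapping.single mu 1"

definition scal :: "Cq \<Rightarrow> ('n::finite) gring \<Rightarrow> 'n gring" where
  "scal c x = Poly_Mapping.single 0 c * x"

definition refl :: "real^'n::finite \<Rightarrow> real^'n \<Rightarrow> real^'n" where
  "refl a v = v - (2 * (v \<bullet> a) / (a \<bullet> a)) *\<^sub>R a"

definition root_system :: "(real^'n::finite) set \<Rightarrow> bool" where
  "root_system R \<longleftrightarrow> finite R \<and> 0 \<notin> R \<and> span R = UNIV \<and>
     (\<forall>a\<in>R. \<forall>b\<in>R. refl a b \<in> R) \<and>
     (\<forall>a\<in>R. \<forall>b\<in>R. 2 * (b \<bullet> a) / (a \<bullet> a) \<in> \<int>) \<and>
     (\<forall>a\<in>R. \<forall>c::real. c *\<^sub>R a \<in> R \<longrightarrow> c = 1 \<or> c = -1)"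

definition irreducible_rs :: "(real^'n::finite) set \<Rightarrow> bool" where
  "irreducible_rs R \<longleftrightarrow> \<not> (\<exists>R1 R2. R1 \<noteq> {} \<and> R2 \<noteq> {} \<and> R = R1 \<union> R2 \<and>
     (\<forall>a\<in>R1. \<forall>b\<in>R2. a \<bullet> b = 0))"

definition is_base :: "(real^'n::finite) set \<Rightarrow> (real^'n) set \<Rightarrow> bool" where
  "is_base R D \<longleftrightarrow> D \<subseteq> R \<and> independent D \<and>
     (\<forall>b\<in>R. \<exists>c::real^'n \<Rightarrow> int. b = (\<Sum>a\<in>D. of_int (c a) *\<^sub>R a) \<and>
        ((\<forall>a\<in>D. c a \<ge> 0) \<or> (\<forall>a\<in>D. c a \<le> 0)))"

definition pos_roots :: "(real^'n::finite) set \<Rightarrow> (real^'n) set \<Rightarrow> (real^'n) set" where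
  "pos_roots R D = {b\<in>R. \<exists>c::real^'n \<Rightarrow> int. b = (\<Sum>a\<in>D. of_int (c a) *\<^sub>R a) \<and>
        (\<forall>a\<in>D. c a \<ge> 0)}"

definition rho :: "(real^'n::finite) set \<Rightarrow> (real^'n) set \<Rightarrow> real^'n" where
  "rho R D = (1/2) *\<^sub>R (\<Sum>b\<in>pos_roots R D. b)"

definition root_lattice :: "(real^'n::finite) set \<Rightarrow> (real^'n) set" where
  "root_lattice R = {v. \<exists>c::real^'n \<Rightarrow> int. v = (\<Sum>a\<in>R. of_int (c a) *\<^sub>R a)}"

definition weight_lattice :: "(real^'n::finite) set \<Rightarrow> (real^'n) set" where
  "weight_lattice R = {v. \<forall>a\<in>R. 2 * (v \<bullet> a) / (a \<bullet> a) \<in> \<int>}"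

definition dominant :: "(real^'n::finite) set \<Rightarrow> (real^'n) set \<Rightarrow> (real^'n) set" where
  "dominant R D = {v \<in> weight_lattice R. \<forall>a\<in>D. v \<bullet> a \<ge> 0}"

inductive_set weyl_group :: "(real^'n::finite) set \<Rightarrow> (real^'n \<Rightarrow> real^'n) set" for R where
  id: "id \<in> weyl_group R"
| step: "w \<in> weyl_group R \<Longrightarrow> a \<in> R \<Longrightarrow> refl a \<circ> w \<in> weyl_group R"

definition wsgn :: "(real^'n::finite \<Rightarrow> real^'n) \<Rightarrow> Cq" where
  "wsgn w = (if det (matrix w) > 0 then 1 else -1)"

definition alt :: "(real^'n::finite) set \<Rightarrow> real^'n \<Rightarrow> 'n gring" where
  "alt R mu = (\<Sum>w\<in>weyl_group R. scal (wsgn w) (gexp (w mu)))"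

text \<open>Character chi(L(lambda)), via the Weyl character formula
  chi(L(lambda)) * A_rho = A_(lambda+rho).\<close>
definition character :: "(real^'n::finite) set \<Rightarrow> (real^'n) set \<Rightarrow> real^'n \<Rightarrow> 'n gring" where
  "character R D lam = (THE f. f * alt R (rho R D) = alt R (lam + rho R D))"

definition cspan :: "'n::finite gring set \<Rightarrow> 'n gring set" where
  "cspan S = {x. \<exists>F c. finite F \<and> F \<subseteq> S \<and> x = (\<Sum>f\<in>F. scal (c f) f)}"

definition rep_ring :: "(real^'n::finite) set \<Rightarrow> (real^'n) set \<Rightarrow> 'n gring set" where
  "rep_ring R D = cspan (character R D ` dominant R D)"

definition even_lattice :: "(real^'n::finite) set \<Rightarrow> (real^'n) set" where
  "even_lattice R = root_lattice R \<inter> (\<lambda>v. 2 *\<^sub>R v) ` weight_lattice R"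

definition U0ev_W :: "(real^'n::finite) set \<Rightarrow> 'n gring set" where
  "U0ev_W R = {x. Poly_Mapping.keys x \<subseteq> even_lattice R \<and>
     (\<forall>w\<in>weyl_group R. \<forall>mu. Poly_Mapping.lookup x (w mu) = Poly_Mapping.lookup x mu)}"

definition Psi :: "(real^'n::finite) set \<Rightarrow> (real^'n) set \<Rightarrow> (real^'n) set" where
  "Psi R D = {lam \<in> dominant R D. 2 *\<^sub>R lam \<in> root_lattice R}"

end

theory Submission
  imports Defs
begin

text \<open>
  The map \<theta> is the pushforward of finitely supported functions along v \<mapsto> v/2, that is
  e^\<mu> \<mapsto> e^(\<mu>/2). It is visibly an injective algebra homomorphism sending orbit sums to orbit
  sums, and it identifies (U^0_ev)^W with the W-invariant elements f supported on
  {\<mu> \<in> \<Lambda>. 2\<mu> \<in> Q}. For such f, the product f A_\<rho> with the Weyl denominator A_\<rho> is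
  alternating, hence a combination of alternants A_\<mu> with \<mu> strictly dominant, and every such
  \<mu> has \<mu> - \<rho> \<in> \<Psi>. Since \<chi>(L(\<mu> - \<rho>)) A_\<rho> = A_\<mu> and multiplication by A_\<rho> is injective
  (the key of f that maximises the pairing with \<rho> survives in f A_\<rho>), f is a combination of
  the characters \<chi>(L(\<lambda>)), \<lambda> \<in> \<Psi>; conversely these characters are W-invariant and
  supported on \<lambda> + Q.

  The characters are given by a definite description, so they must be shown to exist: by
  induction along the dominance order, (orbit sum of \<lambda>) A_\<rho> is A_(\<lambda>+\<rho>) plus alternants of
  strictly dominant weights \<mu> with \<mu> - \<rho> strictly below \<lambda>, whose characters exist already.
\<close>

section \<open>Reflections\<close>

definition copair :: "real^'n::finite \<Rightarrow> real^'n \<Rightarrow> real" where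
  "copair v a = 2 * (v \<bullet> a) / (a \<bullet> a)"

lemma refl_copair: "refl a v = v - copair v a *\<^sub>R a"
  by (simp add: refl_def copair_def)

lemma copair_diff: "copair (u - v) a = copair u a - copair v a"
  by (simp add: copair_def inner_diff_left diff_divide_distrib)

lemma copair_add: "copair (u + v) a = copair u a + copair v a"
  by (simp add: copair_def inner_add_left add_divide_distrib)

lemma copair_scale: "copair (c *\<^sub>R v) a = c * copair v a"
  by (simp add: copair_def)

lemma copair_sum: "copair (sum f S) a = (\<Sum>x\<in>S. copair (f x) a)"
  by (simp add: copair_def inner_sum_left sum_divide_distrib sum_distrib_left)

lemma linear_refl: "linear (refl a)"
  unfolding refl_def by (intro linear_compose_sub linear_id linearI) (auto simp: add_divide_distrib algebra_simps)

lemma refl_refl[simp]: "refl a (refl a v) = v"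
proof (cases "a = 0")
  case True then show ?thesis by (simp add: refl_def)
next
  case False
  then have "a \<bullet> a \<noteq> 0" by simp
  then show ?thesis unfolding refl_def
    by (simp add: algebra_simps diff_divide_distrib)
qed

lemma refl_inner: "refl a u \<bullet> refl a v = u \<bullet> v"
proof (cases "a = 0")
  case True then show ?thesis by (simp add: refl_def)
next
  case False
  then have "a \<bullet> a \<noteq> 0" by simp
  then show ?thesis unfolding refl_def
    by (simp add: inner_diff_right inner_commute field_simps)
qed

lemma refl_adj: "refl a x \<bullet> y = x \<bullet> refl a y"
  by (metis refl_inner refl_refl)

lemma refl_self: "a \<noteq> 0 \<Longrightarrow> refl a a = - a"
  by (simp add: refl_def scaleR_2)

lemma refl_orth: "v \<bullet> a = 0 \<Longrightarrow> refl a v = v"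
  by (simp add: refl_def)

lemma refl_conj_orth: "orthogonal_transformation g \<Longrightarrow> refl (g a) (g v) = g (refl a v)"
  unfolding refl_def orthogonal_transformation_def
  by (simp add: linear_diff linear_scale)

lemma det_refl_axis:
  assumes "c \<noteq> 0"
  shows "det (matrix (refl (axis k c) :: real^'n::finite \<Rightarrow> real^'n)) = -1"
proof -
  define A where "A = matrix (refl (axis k c) :: real^'n \<Rightarrow> real^'n)"
  have ent: "A $ i $ j = (if i = j then (if i = k then -1 else 1) else 0)" for i j
  proof -
    have e1: "axis j 1 \<bullet> axis k c = (if j = k then c else 0)" by (simp add: inner_axis_axis)
    have e2: "axis k c \<bullet> axis k c = c * c" by (simp add: inner_axis_axis)
    show ?thesis using assms unfolding A_def
      by (simp only: matrix_def vec_lambda_beta refl_def e1 e2 vector_minus_component vector_scaleR_component)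
         (auto simp: axis_def)
  qed
  have "det A = prod (\<lambda>i. A $ i $ i) UNIV"
    by (rule det_diagonal) (simp only: ent, simp)
  also have "\<dots> = prod (\<lambda>i. if i = k then -1 else 1) (UNIV :: 'n set)"
    by (rule prod.cong) (simp_all only: ent, simp)
  also have "\<dots> = -1"
    by (subst prod.delta) auto
  finally show ?thesis unfolding A_def .
qed

lemma det_refl:
  assumes "(a :: real^'n::finite) \<noteq> 0"
  shows "det (matrix (refl a)) = -1"
proof -
  \<comment> \<open>Conjugate by an orthogonal map to a reflection in a coordinate hyperplane.\<close>
  obtain k :: 'n where True by simp
  let ?e = "axis k (norm a) :: real^'n"
  have "norm ?e = norm a" by (simp add: norm_eq_sqrt_inner inner_axis_axis)
  then obtain g where g: "orthogonal_transformation g" "g ?e = a"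
    by (metis orthogonal_transformation_exists)
  have eq: "refl a \<circ> g = g \<circ> refl ?e"
    using refl_conj_orth[OF g(1), of ?e] g(2) by (auto simp: fun_eq_iff)
  have lg: "linear g" using g(1) by (simp add: orthogonal_transformation_def)
  have "det (matrix (refl a \<circ> g)) = det (matrix (refl a)) * det (matrix g)"
    by (simp add: matrix_compose[OF lg linear_refl] det_mul)
  moreover have "det (matrix (g \<circ> refl ?e)) = det (matrix g) * det (matrix (refl ?e))"
    by (simp add: matrix_compose[OF linear_refl lg] det_mul)
  moreover have "det (matrix g) \<noteq> 0" using orthogonal_transformation_det[OF g(1)] by auto
  moreover have "det (matrix (refl ?e)) = -1" using assms by (intro det_refl_axis) simp
  ultimately have "(det (matrix (refl a)) + 1) * det (matrix g) = 0" and "det (matrix g) \<noteq> 0"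
    using eq by (auto simp: algebra_simps)
  then show ?thesis by (simp add: add_eq_0_iff)
qed

primrec rword :: "(real^'n::finite) list \<Rightarrow> real^'n \<Rightarrow> real^'n" where
  "rword [] = id"
| "rword (a # l) = refl a \<circ> rword l"

lemma rword_append: "rword (l1 @ l2) = rword l1 \<circ> rword l2"
  by (induction l1) auto

lemma rword_rev_cancel: "rword (rev l) (rword l v) = v"
  by (induction l arbitrary: v) (auto simp: rword_append)

lemma rword_cancel_rev: "rword l (rword (rev l) v) = v"
  by (induction l arbitrary: v) (auto simp: rword_append)


section \<open>Finitely supported functions\<close>

abbreviation "lookup \<equiv> Poly_Mapping.lookup"
abbreviation "keys \<equiv> Poly_Mapping.keys"
abbreviation "single \<equiv> Poly_Mapping.single"

lemma fract_two_neq_zero: "(2 :: 'a::{idom,ring_char_0} fract) \<noteq> 0"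
proof
  assume "(2 :: 'a fract) = 0"
  then have "Fract (2 :: 'a) 1 = Fract 0 1"
    by (metis of_nat_fract[of 2] Zero_fract_def of_nat_numeral)
  then show False by (simp add: eq_fract)
qed

lemma fract_eq_uminus_imp_zero: "(x :: 'a::{idom,ring_char_0} fract) = - x \<Longrightarrow> x = 0"
  by (metis fract_two_neq_zero mult_2 mult_eq_0_iff neg_equal_iff_equal equation_minus_iff
      add.inverse_neutral eq_neg_iff_add_eq_0)

lemma lookup_scal: "lookup (scal c x) k = c * lookup x k"
  unfolding scal_def mult_map_scale_conv_mult[symmetric] Poly_Mapping.map.rep_eq by (simp add: when_def)

lemma scal_add2: "scal (c + d) x = scal c x + scal d x"
  by (simp add: scal_def single_add distrib_right)

lemma scal_mult: "scal c (x * y) = x * scal c y"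
  by (simp add: scal_def mult.left_commute)

lemma scal_mult2: "scal c x * y = scal c (x * y)"
  by (simp add: scal_def mult.assoc)

lemma scal_one[simp]: "scal 1 x = x"
  by (simp add: scal_def)

lemma scal_zero[simp]: "scal 0 x = 0" "scal c 0 = 0"
  by (simp_all add: scal_def)

lemma scal_sg: "scal c (single k d) = single k (c * d)"
  by (simp add: scal_def mult_single)

lemma scal_sum_left: "scal (sum c S) y = (\<Sum>i\<in>S. scal (c i) y)"
  by (induction S rule: infinite_finite_induct) (simp_all add: scal_add2)

lemma keys_add_subset: "keys (f + g) \<subseteq> keys f \<union> keys g"
  by (auto simp: in_keys_iff lookup_add)

lemma keys_diff_subset: "keys (f - g) \<subseteq> keys f \<union> keys (g :: 'a \<Rightarrow>\<^sub>0 'b::ab_group_add)"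
  by (auto simp: in_keys_iff lookup_minus)

lemma keys_scal: "keys (scal c x) \<subseteq> keys x"
  by (auto simp: in_keys_iff lookup_scal)

lemma keys_sum_subset: "keys (sum F I) \<subseteq> (\<Union>i\<in>I. keys (F i))"
proof (induction I rule: infinite_finite_induct)
  case (insert x F) then show ?case using keys_add_subset by fastforce
qed auto

lemma keys_diff_sum_scal_subset:
  "keys (f - (\<Sum>i\<in>I. scal (c i) (h i))) \<subseteq> keys f \<union> (\<Union>i\<in>I. keys (h i))"
proof -
  have "keys (\<Sum>i\<in>I. scal (c i) (h i)) \<subseteq> (\<Union>i\<in>I. keys (h i))"
    using keys_sum_subset[of "\<lambda>i. scal (c i) (h i)" I] keys_scal[of "c _"]
    by (meson UN_mono order_trans order_refl)
  then show ?thesis by (rule order_trans[OF keys_diff_subset Un_mono[OF order_refl]])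
qed

definition pushforward :: "('a \<Rightarrow> 'b) \<Rightarrow> ('a \<Rightarrow>\<^sub>0 'c::comm_monoid_add) \<Rightarrow> ('b \<Rightarrow>\<^sub>0 'c)" where
  "pushforward \<phi> f = (\<Sum>k\<in>keys f. single (\<phi> k) (lookup f k))"

lemma pushforward_superset: "finite S \<Longrightarrow> keys f \<subseteq> S \<Longrightarrow> pushforward \<phi> f = (\<Sum>k\<in>S. single (\<phi> k) (lookup f k))"
  unfolding pushforward_def by (rule sum.mono_neutral_left) (auto simp: in_keys_iff)

lemma pushforward_add: "pushforward \<phi> (f + g) = pushforward \<phi> f + pushforward \<phi> g"
proof -
  let ?S = "keys f \<union> keys g"
  have fin: "finite ?S" by simp
  have "pushforward \<phi> (f + g) = (\<Sum>k\<in>?S. single (\<phi> k) (lookup (f + g) k))"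
    by (rule pushforward_superset[OF fin]) (rule keys_add)
  also have "\<dots> = (\<Sum>k\<in>?S. single (\<phi> k) (lookup f k)) + (\<Sum>k\<in>?S. single (\<phi> k) (lookup g k))"
    by (simp add: lookup_add single_add sum.distrib)
  also have "\<dots> = pushforward \<phi> f + pushforward \<phi> g"
    by (simp add: pushforward_superset[OF fin])
  finally show ?thesis .
qed

lemma pushforward_zero[simp]: "pushforward \<phi> 0 = 0"
  by (simp add: pushforward_def)

lemma pushforward_single[simp]: "pushforward \<phi> (single k c) = single (\<phi> k) c"
  by (cases "c = 0") (simp_all add: pushforward_def)

lemma pushforward_sum: "pushforward \<phi> (sum F I) = (\<Sum>i\<in>I. pushforward \<phi> (F i))"
  by (induction I rule: infinite_finite_induct) (simp_all add: pushforward_add)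

lemma lookup_pushforward_inj: "inj \<phi> \<Longrightarrow> lookup (pushforward \<phi> f) (\<phi> x) = lookup f x"
proof -
  assume inj: "inj \<phi>"
  have "lookup (pushforward \<phi> f) (\<phi> x) = (\<Sum>k\<in>keys f. lookup (single (\<phi> k) (lookup f k)) (\<phi> x))"
    by (simp add: pushforward_def lookup_sum)
  also have "\<dots> = (\<Sum>k\<in>keys f. if k = x then lookup f k else 0)"
    by (rule sum.cong) (auto simp: lookup_single when_def inj_eq[OF inj])
  also have "\<dots> = lookup f x" by (simp add: in_keys_iff)
  finally show ?thesis .
qed

lemma pushforward_id: "pushforward (\<lambda>x. x) f = f"
  by (rule poly_mapping_eqI) (metis inj_on_id2 lookup_pushforward_inj)

lemma poly_mapping_single_expansion: "(\<Sum>k\<in>keys f. single k (lookup f k)) = f"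
  using pushforward_id[of f] unfolding pushforward_def .

lemma mult_single_expansion: "(f::('a::monoid_add \<Rightarrow>\<^sub>0 'c::comm_semiring_1)) * g = (\<Sum>a\<in>keys f. \<Sum>b\<in>keys g. single (a + b) (lookup f a * lookup g b))"
proof -
  have "f * g = (\<Sum>a\<in>keys f. single a (lookup f a)) * (\<Sum>b\<in>keys g. single b (lookup g b))"
    by (simp only: poly_mapping_single_expansion)
  also have "\<dots> = (\<Sum>a\<in>keys f. \<Sum>b\<in>keys g. single a (lookup f a) * single b (lookup g b))"
    by (simp add: sum_product)
  finally show ?thesis by (simp add: mult_single)
qed

lemma lookup_mult_keys: "lookup ((f::('a::monoid_add \<Rightarrow>\<^sub>0 'c::comm_semiring_1)) * g) z =
  (\<Sum>a\<in>keys f. \<Sum>b\<in>keys g. if a + b = z then lookup f a * lookup g b else 0)"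
  by (subst mult_single_expansion) (simp add: lookup_sum lookup_single when_def)

lemma lookup_mult_unique_decomp:
  fixes f g :: "'a::monoid_add \<Rightarrow>\<^sub>0 'c::comm_semiring_1"
  assumes uniq: "\<And>k c. k \<in> keys f \<Longrightarrow> c \<in> keys g \<Longrightarrow> k + c = a + b \<Longrightarrow> k = a \<and> c = b"
  shows "lookup (f * g) (a + b) = lookup f a * lookup g b"
proof -
  have "lookup (f * g) (a + b) =
      (\<Sum>k\<in>keys f. \<Sum>c\<in>keys g. if k = a then (if c = b then lookup f k * lookup g c else 0) else 0)"
    unfolding lookup_mult_keys by (intro sum.cong refl) (use uniq in auto)
  also have "\<dots> = (\<Sum>k\<in>keys f. if k = a then lookup f k * lookup g b else 0)"
    by (intro sum.cong refl) (auto simp: in_keys_iff)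
  also have "\<dots> = lookup f a * lookup g b"
    by (simp add: in_keys_iff)
  finally show ?thesis .
qed

lemma pushforward_mult:
  assumes add: "\<And>x y. \<phi> (x + y) = \<phi> x + \<phi> y"
  shows "pushforward \<phi> ((f::('a::monoid_add \<Rightarrow>\<^sub>0 'c::comm_semiring_1)) * g) = pushforward \<phi> f * pushforward \<phi> g"
proof -
  have "pushforward \<phi> (f * g) = (\<Sum>a\<in>keys f. \<Sum>b\<in>keys g. single (\<phi> a + \<phi> b) (lookup f a * lookup g b))"
    by (subst mult_single_expansion) (simp add: pushforward_sum add)
  also have "\<dots> = (\<Sum>a\<in>keys f. \<Sum>b\<in>keys g. single (\<phi> a) (lookup f a) * single (\<phi> b) (lookup g b))"
    by (simp add: mult_single)
  also have "\<dots> = pushforward \<phi> f * pushforward \<phi> g"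
    by (simp add: pushforward_def sum_product)
  finally show ?thesis .
qed

lemma pushforward_one:
  assumes "\<phi> 0 = 0"
  shows "pushforward \<phi> (1::('a::zero \<Rightarrow>\<^sub>0 'c::comm_semiring_1)) = 1"
  using pushforward_single[of \<phi> 0 "1::'c"] assms by simp

lemma pushforward_scal:
  assumes add: "\<And>x y. \<phi> (x + y) = \<phi> x + \<phi> y"
  shows "pushforward \<phi> (scal c x) = scal c (pushforward \<phi> x)"
proof -
  have "\<phi> 0 = 0" using add[of 0 0] by simp
  then have "pushforward \<phi> (single 0 c * x) = single 0 c * pushforward \<phi> x"
    using pushforward_mult[OF add, of "single 0 c" x] pushforward_single[of \<phi> 0 c] by simp
  then show ?thesis unfolding scal_def .
qed

lemma cspan_sum:
  assumes fin: "finite I" and h: "\<And>i. i \<in> I \<Longrightarrow> h i \<in> T"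
  shows "(\<Sum>i\<in>I. scal (c i) (h i)) \<in> cspan T"
proof -
  define c' where "c' f = (\<Sum>i\<in>{i\<in>I. h i = f}. c i)" for f
  have "(\<Sum>i\<in>I. scal (c i) (h i)) = (\<Sum>f\<in>h ` I. \<Sum>i\<in>{i\<in>I. h i = f}. scal (c i) (h i))"
    by (rule sum.image_gen[OF fin])
  also have "\<dots> = (\<Sum>f\<in>h ` I. scal (c' f) f)"
  proof (rule sum.cong)
    fix f assume "f \<in> h ` I"
    have "(\<Sum>i\<in>{i\<in>I. h i = f}. scal (c i) (h i)) = (\<Sum>i\<in>{i\<in>I. h i = f}. scal (c i) f)"
      by (rule sum.cong) auto
    then show "(\<Sum>i\<in>{i\<in>I. h i = f}. scal (c i) (h i)) = scal (c' f) f"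
      unfolding c'_def by (simp add: scal_sum_left)
  qed simp
  finally show ?thesis unfolding cspan_def using fin h by blast
qed

lemma cspan_mono: "S \<subseteq> T \<Longrightarrow> cspan S \<subseteq> cspan T"
  unfolding cspan_def by blast

definition halve_keys :: "('a::real_vector \<Rightarrow>\<^sub>0 'c::comm_monoid_add) \<Rightarrow> ('a \<Rightarrow>\<^sub>0 'c)" where
  "halve_keys = pushforward (\<lambda>v. (1/2) *\<^sub>R v)"

definition double_keys :: "('a::real_vector \<Rightarrow>\<^sub>0 'c::comm_monoid_add) \<Rightarrow> ('a \<Rightarrow>\<^sub>0 'c)" where
  "double_keys = pushforward (\<lambda>v. 2 *\<^sub>R v)"

lemma inj_scaleR_half: "inj (\<lambda>v::'a::real_vector. (1/2) *\<^sub>R v)"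
  by (rule injI) simp

lemma inj_scaleR_two: "inj (\<lambda>v::'a::real_vector. 2 *\<^sub>R v)"
  by (rule injI) simp

lemma lookup_halve_keys: "lookup (halve_keys x) v = lookup x (2 *\<^sub>R v)"
proof -
  have "lookup (halve_keys x) v = lookup (halve_keys x) ((1/2) *\<^sub>R (2 *\<^sub>R v))" by simp
  also have "\<dots> = lookup x (2 *\<^sub>R v)" unfolding halve_keys_def by (rule lookup_pushforward_inj[OF inj_scaleR_half])
  finally show ?thesis .
qed

lemma lookup_double_keys: "lookup (double_keys x) v = lookup x ((1/2) *\<^sub>R v)"
proof -
  have "lookup (double_keys x) v = lookup (double_keys x) (2 *\<^sub>R ((1/2) *\<^sub>R v))" by simp
  also have "\<dots> = lookup x ((1/2) *\<^sub>R v)" unfolding double_keys_def by (rule lookup_pushforward_inj[OF inj_scaleR_two])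
  finally show ?thesis .
qed

lemma keys_halve_keys: "keys (halve_keys x) = (\<lambda>v. (1/2) *\<^sub>R v) ` keys x"
  by (force simp: in_keys_iff lookup_halve_keys image_iff intro: bexI[where x = "2 *\<^sub>R _"])

lemma halve_double_keys: "halve_keys (double_keys f) = f"
  by (rule poly_mapping_eqI) (simp add: lookup_halve_keys lookup_double_keys)

lemma halve_keys_add: "halve_keys (x + y) = halve_keys x + halve_keys y"
  unfolding halve_keys_def by (rule pushforward_add)

lemma halve_keys_mult:
  "halve_keys (x * y) = halve_keys x * halve_keys (y :: 'a::real_vector \<Rightarrow>\<^sub>0 'c::comm_semiring_1)"
  unfolding halve_keys_def by (rule pushforward_mult) (rule scaleR_right_distrib)

lemma halve_keys_scal: "halve_keys (scal c x) = scal c (halve_keys x)"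
  unfolding halve_keys_def by (rule pushforward_scal) (rule scaleR_right_distrib)

lemma halve_keys_one: "halve_keys 1 = (1 :: 'a::real_vector \<Rightarrow>\<^sub>0 'c::comm_semiring_1)"
  unfolding halve_keys_def by (rule pushforward_one) simp

lemma inj_halve_keys: "inj (halve_keys :: ('a::real_vector \<Rightarrow>\<^sub>0 'c::comm_monoid_add) \<Rightarrow> _)"
proof (rule injI, rule poly_mapping_eqI)
  fix x y :: "'a \<Rightarrow>\<^sub>0 'c" and v assume "halve_keys x = halve_keys y"
  then have "lookup (halve_keys x) ((1/2) *\<^sub>R v) = lookup (halve_keys y) ((1/2) *\<^sub>R v)" by simp
  then show "lookup x v = lookup y v" by (simp add: lookup_halve_keys)
qed


section \<open>The Weyl group\<close>

locale based_root_system =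
  fixes R D :: "(real^'n::finite) set"
  assumes rs: "root_system R" and base: "is_base R D"
begin

abbreviation "W \<equiv> weyl_group R"
abbreviation "Rpos \<equiv> pos_roots R D"
abbreviation "\<rho> \<equiv> rho R D"
abbreviation Q where "Q \<equiv> root_lattice R"
abbreviation P where "P \<equiv> weight_lattice R"

lemma finite_R: "finite R" and zero_notin_R: "0 \<notin> R" and span_R: "span R = UNIV"
  and refl_in_R: "a \<in> R \<Longrightarrow> b \<in> R \<Longrightarrow> refl a b \<in> R"
  and copair_R_Ints: "a \<in> R \<Longrightarrow> b \<in> R \<Longrightarrow> copair b a \<in> \<int>"
  and R_reduced: "a \<in> R \<Longrightarrow> c *\<^sub>R a \<in> R \<Longrightarrow> c = 1 \<or> c = -1"
  using rs unfolding root_system_def copair_def by auto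

lemma W_linear: "w \<in> W \<Longrightarrow> linear w"
proof (induction rule: weyl_group.induct)
  case id then show ?case by (simp add: linear_iff)
next
  case (step w a) show ?case by (rule linear_compose[OF step.IH linear_refl])
qed

lemma W_inner: "w \<in> W \<Longrightarrow> w u \<bullet> w v = u \<bullet> v"
  by (induction arbitrary: u v rule: weyl_group.induct) (auto simp: refl_inner)

lemma W_R: "w \<in> W \<Longrightarrow> b \<in> R \<Longrightarrow> w b \<in> R"
  by (induction rule: weyl_group.induct) (auto intro: refl_in_R)

lemma W_comp: "w \<in> W \<Longrightarrow> w' \<in> W \<Longrightarrow> w \<circ> w' \<in> W"
  by (induction rule: weyl_group.induct) (auto simp: o_assoc[symmetric] intro: weyl_group.step)

lemma refl_W: "a \<in> R \<Longrightarrow> refl a \<in> W"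
  using weyl_group.step[OF weyl_group.id] by simp

lemma W_inv_ex: "w \<in> W \<Longrightarrow> \<exists>w'\<in>W. w' \<circ> w = id \<and> w \<circ> w' = id"
proof (induction rule: weyl_group.induct)
  case id then show ?case by (metis comp_id weyl_group.id)
next
  case (step w a)
  then obtain w' where w': "w' \<in> W" "w' \<circ> w = id" "w \<circ> w' = id" by blast
  have "w' \<circ> refl a \<in> W" using W_comp[OF w'(1) refl_W[OF step(2)]] .
  moreover have "(w' \<circ> refl a) \<circ> (refl a \<circ> w) = id"
    using w' by (auto simp: fun_eq_iff pointfree_idE)
  moreover have "(refl a \<circ> w) \<circ> (w' \<circ> refl a) = id"
    using w' by (auto simp: fun_eq_iff pointfree_idE)
  ultimately show ?case by blast
qed

lemma W_bij: "w \<in> W \<Longrightarrow> bij w"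
  using W_inv_ex by (metis o_bij)

lemma W_inv: "w \<in> W \<Longrightarrow> inv w \<in> W"
proof -
  assume w: "w \<in> W"
  then obtain w' where "w' \<in> W" "w' \<circ> w = id" "w \<circ> w' = id" using W_inv_ex by blast
  moreover then have "inv w = w'" by (metis inv_unique_comp)
  ultimately show ?thesis by simp
qed

lemma W_inv_inv: "w \<in> W \<Longrightarrow> inv (inv w) = w"
  using W_bij inv_inv_eq by blast

lemma W_inv_apply[simp]: "w \<in> W \<Longrightarrow> w (inv w v) = v"
  using W_bij bij_inv_eq_iff by metis

lemma W_apply_inv[simp]: "w \<in> W \<Longrightarrow> inv w (w v) = v"
  using W_bij bij_inv_eq_iff by metis

lemma W_inj: "w \<in> W \<Longrightarrow> w u = w v \<longleftrightarrow> u = v"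
  using W_bij bij_is_inj inj_eq by metis

lemma W_add: "w \<in> W \<Longrightarrow> w (u + v) = w u + w v"
  using W_linear linear_add by blast

lemma W_diff: "w \<in> W \<Longrightarrow> w (u - v) = w u - w v"
  using W_linear linear_diff by blast

lemma W_scale: "w \<in> W \<Longrightarrow> w (c *\<^sub>R v) = c *\<^sub>R w v"
  using W_linear linear_scale by blast

lemma W_neg: "w \<in> W \<Longrightarrow> w (- v) = - w v"
  using W_linear linear_neg by blast

lemma W_copair: "w \<in> W \<Longrightarrow> copair (w u) (w v) = copair u v"
  by (simp add: copair_def W_inner)

lemma W_inner_inv: "w \<in> W \<Longrightarrow> w u \<bullet> v = u \<bullet> inv w v"
  by (metis W_inner W_inv_apply)

lemma W_finite: "finite W"
proof -
  have "inj_on (\<lambda>w. restrict w R) W"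
  proof (rule inj_onI)
    fix w w' assume ww: "w \<in> W" "w' \<in> W" "restrict w R = restrict w' R"
    have "w x = w' x" for x
      by (rule linear_eq_on_span[OF W_linear[OF ww(1)] W_linear[OF ww(2)], of R])
         (use ww(3) span_R in \<open>auto dest: fun_cong[of _ _ x] simp: restrict_def split: if_splits\<close>, metis)
    then show "w = w'" by auto
  qed
  moreover have "(\<lambda>w. restrict w R) ` W \<subseteq> PiE R (\<lambda>_. R)"
    using W_R by auto
  moreover have "finite (PiE R (\<lambda>_. R))" using finite_R by (simp add: finite_PiE)
  ultimately show ?thesis using finite_imageD finite_subset by metis
qed

lemma refl_conj: "w \<in> W \<Longrightarrow> refl (w a) (w v) = w (refl a v)"
  by (simp add: refl_copair W_copair W_diff W_scale)

lemma W_comp_bij: "u \<in> W \<Longrightarrow> bij_betw (\<lambda>w. u \<circ> w) W W"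
proof (rule bij_betw_imageI)
  assume u: "u \<in> W"
  show "inj_on (\<lambda>w. u \<circ> w) W"
  proof (rule inj_onI)
    fix w1 w2 assume "u \<circ> w1 = u \<circ> w2"
    then have "w1 x = w2 x" for x using W_inj[OF u] by (metis comp_apply)
    then show "w1 = w2" by auto
  qed
  show "(\<lambda>w. u \<circ> w) ` W = W"
  proof
    show "(\<lambda>w. u \<circ> w) ` W \<subseteq> W" using W_comp[OF u] by auto
    show "W \<subseteq> (\<lambda>w. u \<circ> w) ` W"
    proof
      fix w assume w: "w \<in> W"
      have "u \<circ> (inv u \<circ> w) = w" using u by (auto simp: fun_eq_iff)
      moreover have "inv u \<circ> w \<in> W" using W_comp[OF W_inv[OF u] w] .
      ultimately show "w \<in> (\<lambda>w. u \<circ> w) ` W" by (metis image_eqI)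
    qed
  qed
qed

lemma W_orth: "w \<in> W \<Longrightarrow> orthogonal_transformation w"
  by (simp add: orthogonal_transformation_def W_linear W_inner)

lemma W_det: "w \<in> W \<Longrightarrow> det (matrix w) = 1 \<or> det (matrix w) = -1"
proof -
  assume "w \<in> W"
  then have "\<bar>det (matrix w)\<bar> = 1" using orthogonal_transformation_det[OF W_orth] by blast
  then show ?thesis by (cases "det (matrix w) \<ge> 0") auto
qed

lemma wsgn_sq[simp]: "wsgn w * wsgn w = 1"
  by (simp add: wsgn_def)

lemma wsgn_mult: "w \<in> W \<Longrightarrow> w' \<in> W \<Longrightarrow> wsgn (w \<circ> w') = wsgn w * wsgn w'"
proof -
  assume w: "w \<in> W" "w' \<in> W"
  have "det (matrix (w \<circ> w')) = det (matrix w) * det (matrix w')"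
    by (simp add: matrix_compose[OF W_linear[OF w(2)] W_linear[OF w(1)]] det_mul)
  then show ?thesis using W_det[OF w(1)] W_det[OF w(2)]
    by (auto simp: wsgn_def)
qed

lemma wsgn_id[simp]: "wsgn id = 1"
  by (simp add: wsgn_def)

lemma wsgn_refl: "a \<noteq> 0 \<Longrightarrow> wsgn (refl a) = -1"
  by (simp add: wsgn_def det_refl)


section \<open>Simple roots and positive roots\<close>

definition coord :: "real^'n \<Rightarrow> real^'n \<Rightarrow> real" where
  "coord a v = representation D v a"

lemma D_subset_R: "D \<subseteq> R" and independent_D: "independent D"
  and D_expansion: "\<And>b. b \<in> R \<Longrightarrow> \<exists>c::real^'n \<Rightarrow> int. b = (\<Sum>a\<in>D. of_int (c a) *\<^sub>R a) \<and>
        ((\<forall>a\<in>D. c a \<ge> 0) \<or> (\<forall>a\<in>D. c a \<le> 0))"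
  using base unfolding is_base_def by auto

lemma finite_D: "finite D" using D_subset_R finite_R finite_subset by blast

lemma span_D: "span D = UNIV"
proof -
  have "R \<subseteq> span D"
  proof
    fix b assume "b \<in> R"
    then obtain c :: "real^'n \<Rightarrow> int" where "b = (\<Sum>a\<in>D. of_int (c a) *\<^sub>R a)" using D_expansion by blast
    then show "b \<in> span D" by (simp add: span_sum span_scale span_base)
  qed
  then have "span R \<subseteq> span D" by (simp add: span_minimal)
  then show ?thesis using span_R by auto
qed

lemma zero_notin_D: "0 \<notin> D" using D_subset_R zero_notin_R by auto

lemma D_nonempty: "D \<noteq> {}"
proof
  assume "D = {}"
  then have "span D = {0}" by simp
  moreover have "(axis undefined 1 :: real^'n) \<noteq> 0" by (simp add: axis_eq_0_iff)
  ultimately show False using span_D by auto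
qed

lemma coord_add: "coord a (u + v) = coord a u + coord a v"
  unfolding coord_def using real_vector.representation_add[OF independent_D] span_D by simp

lemma coord_scale: "coord a (c *\<^sub>R v) = c * coord a v"
  unfolding coord_def using real_vector.representation_scale[OF independent_D] span_D by simp

lemma coord_neg: "coord a (- v) = - coord a v"
  unfolding coord_def using real_vector.representation_neg[OF independent_D] span_D by simp

lemma coord_diff: "coord a (u - v) = coord a u - coord a v"
  unfolding coord_def using real_vector.representation_diff[OF independent_D] span_D by simp

lemma coord_sum: "coord a (sum f S) = (\<Sum>x\<in>S. coord a (f x))"
  unfolding coord_def by (subst real_vector.representation_sum[OF independent_D]) (auto simp: span_D)

lemma coord_zero: "coord a 0 = 0"
  unfolding coord_def by (simp add: real_vector.representation_zero)

lemma coord_D: "b \<in> D \<Longrightarrow> coord a b = (if a = b then 1 else 0)"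
  unfolding coord_def using real_vector.representation_basis[OF independent_D] by simp

lemma coord_expansion: "v = (\<Sum>a\<in>D. coord a v *\<^sub>R a)"
  unfolding coord_def using real_vector.sum_representation_eq[OF independent_D _ finite_D] span_D by simp

lemma coord_comb: "a \<in> D \<Longrightarrow> coord a (\<Sum>b\<in>D. k b *\<^sub>R b) = k a"
proof -
  assume a: "a \<in> D"
  have "coord a (\<Sum>b\<in>D. k b *\<^sub>R b) = (\<Sum>b\<in>D. k b * (if a = b then 1 else 0))"
    by (simp add: coord_sum coord_scale coord_D)
  also have "\<dots> = (\<Sum>b\<in>D. if a = b then k b else 0)" by (rule sum.cong) auto
  also have "\<dots> = k a" using a finite_D by simp
  finally show ?thesis .
qed

lemma eq_iff_coords: "u = v \<longleftrightarrow> (\<forall>a\<in>D. coord a u = coord a v)"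
proof
  assume h: "\<forall>a\<in>D. coord a u = coord a v"
  have "u = (\<Sum>a\<in>D. coord a u *\<^sub>R a)" by (rule coord_expansion)
  also have "\<dots> = (\<Sum>a\<in>D. coord a v *\<^sub>R a)" using h by (intro sum.cong) auto
  also have "\<dots> = v" by (rule coord_expansion[symmetric])
  finally show "u = v" .
qed simp

lemma coord_R: "b \<in> R \<Longrightarrow> (\<forall>a\<in>D. coord a b \<in> \<int>) \<and> ((\<forall>a\<in>D. coord a b \<ge> 0) \<or> (\<forall>a\<in>D. coord a b \<le> 0))"
proof -
  assume "b \<in> R"
  then obtain c :: "real^'n \<Rightarrow> int" where c: "b = (\<Sum>a\<in>D. of_int (c a) *\<^sub>R a)"
    "(\<forall>a\<in>D. c a \<ge> 0) \<or> (\<forall>a\<in>D. c a \<le> 0)" using D_expansion by blast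
  have "\<forall>a\<in>D. coord a b = of_int (c a)" using c(1) coord_comb by simp
  then show ?thesis using c(2) by auto
qed

lemma inner_coord_expansion: "v \<bullet> b = (\<Sum>a\<in>D. coord a b * (v \<bullet> a))"
proof -
  have "v \<bullet> b = v \<bullet> (\<Sum>a\<in>D. coord a b *\<^sub>R a)" using coord_expansion[of b] by simp
  then show ?thesis by (simp add: inner_sum_right)
qed

lemma copair_coord_expansion: "copair v b = (\<Sum>a\<in>D. coord a v * copair a b)"
proof -
  have "copair v b = copair (\<Sum>a\<in>D. coord a v *\<^sub>R a) b" using coord_expansion[of v] by simp
  then show ?thesis by (simp add: copair_sum copair_scale)
qed

lemma Rpos_iff: "b \<in> Rpos \<longleftrightarrow> b \<in> R \<and> (\<forall>a\<in>D. coord a b \<ge> 0)"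
proof
  assume "b \<in> Rpos"
  then obtain c :: "real^'n \<Rightarrow> int" where c: "b \<in> R" "b = (\<Sum>a\<in>D. of_int (c a) *\<^sub>R a)"
    "\<forall>a\<in>D. c a \<ge> 0" unfolding pos_roots_def by blast
  then show "b \<in> R \<and> (\<forall>a\<in>D. coord a b \<ge> 0)" using coord_comb by simp
next
  assume b: "b \<in> R \<and> (\<forall>a\<in>D. coord a b \<ge> 0)"
  define c where "c a = floor (coord a b)" for a
  have "of_int (c a) = coord a b" if "a \<in> D" for a
  proof -
    have "coord a b \<in> \<int>" using coord_R b that by blast
    then obtain m where "coord a b = of_int m" by (auto elim: Ints_cases)
    then show ?thesis unfolding c_def by simp
  qed
  then have "b = (\<Sum>a\<in>D. of_int (c a) *\<^sub>R a)"
    using eq_iff_coords by (simp add: coord_comb)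
  moreover have "\<forall>a\<in>D. c a \<ge> 0" using b unfolding c_def by auto
  ultimately show "b \<in> Rpos" unfolding pos_roots_def using b by blast
qed

lemma uminus_R: "b \<in> R \<Longrightarrow> - b \<in> R"
proof -
  assume b: "b \<in> R"
  then have "b \<noteq> 0" using zero_notin_R by auto
  then show ?thesis using refl_in_R[OF b b] refl_self by metis
qed

lemma R_pos_or_neg: "b \<in> R \<Longrightarrow> b \<in> Rpos \<or> - b \<in> Rpos"
proof -
  assume b: "b \<in> R"
  show ?thesis
  proof (cases "\<forall>a\<in>D. coord a b \<ge> 0")
    case True then show ?thesis using b by (simp add: Rpos_iff)
  next
    case False
    then have "\<forall>a\<in>D. coord a b \<le> 0" using coord_R[OF b] by blast
    then have "- b \<in> Rpos" using uminus_R[OF b] by (simp add: Rpos_iff coord_neg)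
    then show ?thesis by blast
  qed
qed

lemma Rpos_R: "b \<in> Rpos \<Longrightarrow> b \<in> R" by (simp add: Rpos_iff)

lemma Rpos_coord_pos: "b \<in> Rpos \<Longrightarrow> \<exists>a\<in>D. coord a b > 0"
proof (rule ccontr)
  assume b: "b \<in> Rpos" "\<not> (\<exists>a\<in>D. coord a b > 0)"
  then have "\<forall>a\<in>D. coord a b = 0" by (force simp: Rpos_iff)
  then have "b = 0" using eq_iff_coords[of b 0] by (simp add: coord_zero)
  then show False using b zero_notin_R Rpos_R by auto
qed

lemma Rpos_uminus_notin: "b \<in> Rpos \<Longrightarrow> - b \<notin> Rpos"
proof
  assume b: "b \<in> Rpos" "- b \<in> Rpos"
  obtain a where "a \<in> D" "coord a b > 0" using Rpos_coord_pos b by blast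
  then show False using b(2) by (auto simp: Rpos_iff coord_neg)
qed

lemma D_Rpos: "a \<in> D \<Longrightarrow> a \<in> Rpos"
  using D_subset_R by (auto simp: Rpos_iff coord_D)

lemma finite_Rpos: "finite Rpos" by (rule finite_subset[OF _ finite_R]) (auto simp: Rpos_iff)

lemma refl_simple_Rpos:
  assumes al: "al \<in> D" and b: "b \<in> Rpos" "b \<noteq> al"
  shows "refl al b \<in> Rpos"
proof -
  have coef_r: "coord a (refl al b) = coord a b - copair b al * coord a al" for a
    by (simp add: refl_copair coord_diff coord_scale)
  have "\<exists>a'\<in>D. a' \<noteq> al \<and> coord a' b > 0"
  proof (rule ccontr)
    assume "\<not> ?thesis"
    then have z: "\<forall>a\<in>D. a \<noteq> al \<longrightarrow> coord a b = 0" using b by (force simp: Rpos_iff)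
    define t where "t = coord al b"
    have bt: "b = t *\<^sub>R al"
      unfolding eq_iff_coords[of b] using z al by (auto simp: coord_scale coord_D t_def)
    have "t *\<^sub>R al \<in> R" using bt b(1) Rpos_R by metis
    then have "t = 1 \<or> t = -1" using R_reduced[of al t] al D_subset_R by auto
    moreover have "t \<ge> 0" using b al by (auto simp: Rpos_iff t_def)
    ultimately have "t = 1" by auto
    then show False using bt b(2) by simp
  qed
  then obtain a' where a': "a' \<in> D" "a' \<noteq> al" "coord a' b > 0" by blast
  have rR: "refl al b \<in> R" using refl_in_R al D_subset_R b Rpos_R by auto
  have "coord a' (refl al b) > 0" using a' al by (simp add: coef_r coord_D)
  then have "\<forall>a\<in>D. coord a (refl al b) \<ge> 0" using coord_R[OF rR] a'(1) by force
  then show ?thesis using rR by (simp add: Rpos_iff)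
qed

lemma refl_simple_self_notin_Rpos: "a \<in> D \<Longrightarrow> refl a a \<notin> Rpos"
proof -
  assume a: "a \<in> D"
  then have "a \<noteq> 0" using zero_notin_D by auto
  then have "refl a a = - a" by (rule refl_self)
  then show ?thesis using Rpos_uminus_notin D_Rpos a by metis
qed

lemma refl_simple_permutes:
  assumes a: "a \<in> D"
  shows "refl a ` (Rpos - {a}) = Rpos - {a}"
proof -
  have sub: "refl a b \<in> Rpos - {a}" if b: "b \<in> Rpos - {a}" for b
  proof -
    have "refl a b \<in> Rpos" using refl_simple_Rpos[OF a] b by auto
    moreover have "refl a b \<noteq> a"
    proof
      assume "refl a b = a"
      then have "b = refl a a" by (metis refl_refl)
      then show False using refl_simple_self_notin_Rpos[OF a] b by auto
    qed
    ultimately show ?thesis by auto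
  qed
  show ?thesis
  proof
    show "refl a ` (Rpos - {a}) \<subseteq> Rpos - {a}" using sub by auto
    show "Rpos - {a} \<subseteq> refl a ` (Rpos - {a})"
    proof
      fix b assume "b \<in> Rpos - {a}"
      then have "refl a (refl a b) = b" "refl a b \<in> Rpos - {a}" using sub by auto
      then show "b \<in> refl a ` (Rpos - {a})" by (metis image_eqI)
    qed
  qed
qed

lemma refl_simple_rho:
  assumes a: "a \<in> D"
  shows "refl a \<rho> = \<rho> - a"
proof -
  have aR: "a \<in> Rpos" using D_Rpos a by auto
  have a0: "a \<noteq> 0" using a zero_notin_D by auto
  have inj: "inj_on (refl a) (Rpos - {a})" by (metis inj_on_inverseI refl_refl)
  have "(\<Sum>b\<in>Rpos. refl a b) = refl a a + (\<Sum>b\<in>Rpos - {a}. refl a b)"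
    using aR finite_Rpos by (simp add: sum.remove)
  also have "(\<Sum>b\<in>Rpos - {a}. refl a b) = (\<Sum>b\<in>refl a ` (Rpos - {a}). b)"
    using sum.reindex[OF inj, of id] by simp
  also have "\<dots> = (\<Sum>b\<in>Rpos - {a}. b)" using refl_simple_permutes[OF a] by simp
  also have "\<dots> = (\<Sum>b\<in>Rpos. b) - a" using aR finite_Rpos by (simp add: sum_diff1)
  finally have "(\<Sum>b\<in>Rpos. refl a b) = (\<Sum>b\<in>Rpos. b) - 2 *\<^sub>R a"
    using refl_self[OF a0] by (simp add: scaleR_2)
  moreover have "refl a \<rho> = (1/2) *\<^sub>R (\<Sum>b\<in>Rpos. refl a b)"
    unfolding rho_def using linear_refl[of a]
    by (simp add: linear_scale linear_sum)
  ultimately have "refl a \<rho> = (1/2) *\<^sub>R ((\<Sum>b\<in>Rpos. b) - 2 *\<^sub>R a)" unfolding rho_def by simp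
  then show ?thesis unfolding rho_def by (simp add: scaleR_diff_right)
qed

lemma copair_rho_simple: "a \<in> D \<Longrightarrow> copair \<rho> a = 1"
proof -
  assume a: "a \<in> D"
  then have a0: "a \<noteq> 0" using zero_notin_D by auto
  have "copair \<rho> a *\<^sub>R a = 1 *\<^sub>R a" using refl_simple_rho[OF a] by (simp add: refl_copair)
  then show ?thesis using a0 by (metis scaleR_cancel_right)
qed

lemma rho_inner_simple: "a \<in> D \<Longrightarrow> \<rho> \<bullet> a = (a \<bullet> a) / 2"
proof -
  assume a: "a \<in> D"
  then have "a \<bullet> a \<noteq> 0" using zero_notin_D by auto
  then show ?thesis using copair_rho_simple[OF a] unfolding copair_def by (simp add: field_simps)
qed

lemma rho_inner_simple_pos: "a \<in> D \<Longrightarrow> \<rho> \<bullet> a > 0"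
proof -
  assume a: "a \<in> D"
  then have "a \<noteq> 0" using zero_notin_D by auto
  then have "a \<bullet> a > 0" by simp
  then show ?thesis using rho_inner_simple[OF a] by linarith
qed

definition height :: "real^'n \<Rightarrow> real" where "height v = (\<Sum>a\<in>D. coord a v)"

lemma height_diff: "height (u - v) = height u - height v"
  by (simp add: height_def coord_diff sum_subtractf)

lemma height_scale: "height (c *\<^sub>R v) = c * height v"
  by (simp add: height_def coord_scale sum_distrib_left)

lemma height_simple: "a \<in> D \<Longrightarrow> height a = 1"
  using finite_D by (simp add: height_def coord_D sum.delta')

lemma height_Rpos_nonneg: "b \<in> Rpos \<Longrightarrow> height b \<ge> 0"
  unfolding height_def by (rule sum_nonneg) (simp add: Rpos_iff)


lemma Rpos_inner_simple_pos: "b \<in> Rpos \<Longrightarrow> \<exists>a\<in>D. b \<bullet> a > 0"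
proof (rule ccontr)
  assume b: "b \<in> Rpos" and "\<not> (\<exists>a\<in>D. b \<bullet> a > 0)"
  then have "b \<bullet> b \<le> 0" unfolding inner_coord_expansion[of b b]
    by (intro sum_nonpos) (auto simp: Rpos_iff mult_nonneg_nonpos not_less)
  moreover have "b \<noteq> 0" using b Rpos_R zero_notin_R by auto
  ultimately show False by (simp add: inner_gt_zero_iff[symmetric] not_le[symmetric])
qed

lemma copair_roots_ge_1: "a \<in> R \<Longrightarrow> b \<in> R \<Longrightarrow> b \<bullet> a > 0 \<Longrightarrow> copair b a \<ge> 1"
proof -
  assume a: "a \<in> R" and b: "b \<in> R" and ba: "b \<bullet> a > 0"
  have "a \<bullet> a > 0" using a zero_notin_R by auto
  then have "copair b a > 0" using ba unfolding copair_def by simp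
  moreover have "copair b a \<in> \<int>" using copair_R_Ints[OF a b] .
  ultimately show ?thesis by (auto elim: Ints_cases)
qed

lemma height_refl_simple: "a \<in> D \<Longrightarrow> height (refl a b) = height b - copair b a"
  using height_simple by (simp add: refl_copair height_diff height_scale)


section \<open>Words in the simple reflections\<close>

lemma rword_W: "set l \<subseteq> R \<Longrightarrow> rword l \<in> W"
proof (induction l)
  case Nil then show ?case using weyl_group.id by (auto simp: id_def)
next
  case (Cons a l)
  have "rword l \<in> W" "a \<in> R" using Cons by auto
  then have "refl a \<circ> rword l \<in> W" by (rule weyl_group.step)
  then show ?case by (simp only: rword.simps)
qed

lemma rword_simple_W: "set l \<subseteq> D \<Longrightarrow> rword l \<in> W"
  using rword_W D_subset_R by auto

lemma Rpos_conj_simple: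
  "b \<in> Rpos \<Longrightarrow> \<exists>l a. set l \<subseteq> D \<and> a \<in> D \<and> b = rword l a"
proof (induction "nat \<lfloor>height b\<rfloor>" arbitrary: b rule: less_induct)
  case less
  show ?case
  proof (cases "b \<in> D")
    case True then show ?thesis by (intro exI[of _ "[]"]) auto
  next
    case False
    obtain a where a: "a \<in> D" "b \<bullet> a > 0" using Rpos_inner_simple_pos[OF less.prems] by blast
    have b': "refl a b \<in> Rpos" using refl_simple_Rpos[OF a(1) less.prems] False a(1) by auto
    have "height (refl a b) \<le> height b - 1"
      using height_refl_simple[OF a(1)] copair_roots_ge_1 a D_subset_R less.prems Rpos_R by force
    then have "\<lfloor>height (refl a b)\<rfloor> \<le> \<lfloor>height b\<rfloor> - 1" using floor_mono by fastforce
    moreover have "0 \<le> \<lfloor>height (refl a b)\<rfloor>" using height_Rpos_nonneg[OF b'] by simp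
    ultimately have "nat \<lfloor>height (refl a b)\<rfloor> < nat \<lfloor>height b\<rfloor>" by linarith
    then obtain l a' where l: "set l \<subseteq> D" "a' \<in> D" "refl a b = rword l a'"
      using less.hyps[OF _ b'] by blast
    then have "b = rword (a # l) a'" by (metis refl_refl rword.simps(2) comp_apply)
    then show ?thesis using l a by (intro exI[of _ "a # l"] exI[of _ a']) auto
  qed
qed

lemma R_conj_simple:
  assumes b: "b \<in> R" shows "\<exists>l al. set l \<subseteq> D \<and> al \<in> D \<and> b = rword l al"
proof (cases "b \<in> Rpos")
  case True then show ?thesis using Rpos_conj_simple by blast
next
  case False
  then have "- b \<in> Rpos" using R_pos_or_neg b by blast
  then obtain l al where l: "set l \<subseteq> D" "al \<in> D" "- b = rword l al" using Rpos_conj_simple by blast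
  have "al \<noteq> 0" using l zero_notin_D by auto
  then have "rword (l @ [al]) al = rword l (- al)" by (simp add: rword_append refl_self)
  also have "\<dots> = - rword l al" using W_neg[OF rword_simple_W[OF l(1)]] by simp
  also have "\<dots> = b" using l(3) by (metis minus_minus)
  finally show ?thesis using l by (intro exI[of _ "l @ [al]"] exI[of _ al]) auto
qed

lemma refl_eq_rword: "b \<in> R \<Longrightarrow> \<exists>l. set l \<subseteq> D \<and> refl b = rword l"
proof -
  assume "b \<in> R"
  then obtain l al where l: "set l \<subseteq> D" "al \<in> D" "b = rword l al" using R_conj_simple by blast
  have u: "rword l \<in> W" using rword_simple_W[OF l(1)] .
  have "refl b x = rword (l @ al # rev l) x" for x
  proof -
    have "refl b x = refl (rword l al) (rword l (rword (rev l) x))" using l(3) rword_cancel_rev by metis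
    also have "\<dots> = rword l (refl al (rword (rev l) x))" using refl_conj[OF u] by simp
    finally show ?thesis by (simp add: rword_append)
  qed
  then show ?thesis using l by (intro exI[of _ "l @ al # rev l"]) auto
qed

lemma W_eq_rword: "w \<in> W \<Longrightarrow> \<exists>l. set l \<subseteq> D \<and> w = rword l"
proof (induction rule: weyl_group.induct)
  case id then show ?case by (intro exI[of _ "[]"]) auto
next
  case (step w a)
  then obtain l where l: "set l \<subseteq> D" "w = rword l" by blast
  obtain la where la: "set la \<subseteq> D" "refl a = rword la" using refl_eq_rword step by blast
  show ?case using l la by (intro exI[of _ "la @ l"]) (simp add: rword_append)
qed

lemma rword_exchange:
  assumes "set xs \<subseteq> D" "t \<in> D" "- rword xs t \<in> Rpos"
  shows "\<exists>ys. set ys \<subseteq> D \<and> length ys < length xs + 1 \<and> rword ys = rword (xs @ [t])"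
  using assms
proof (induction xs)
  case Nil
  then show ?case using Rpos_uminus_notin D_Rpos by auto
next
  case (Cons a xs)
  have a: "a \<in> D" and xs: "set xs \<subseteq> D" using Cons.prems by auto
  let ?b = "rword xs t"
  have bR: "?b \<in> R" using W_R[OF rword_simple_W[OF xs]] Cons.prems D_subset_R by auto
  show ?case
  proof (cases "- ?b \<in> Rpos")
    case True
    then obtain ys where ys: "set ys \<subseteq> D" "length ys < length xs + 1" "rword ys = rword (xs @ [t])"
      using Cons.IH xs Cons.prems by blast
    then show ?thesis using a by (intro exI[of _ "a # ys"]) auto
  next
    case False
    then have bp: "?b \<in> Rpos" using R_pos_or_neg bR by blast
    have neg: "- refl a ?b \<in> Rpos" using Cons.prems by simp
    have "?b = a"
    proof (rule ccontr)
      assume "?b \<noteq> a"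
      then have "refl a ?b \<in> Rpos" using refl_simple_Rpos[OF a bp] by auto
      then show False using neg Rpos_uminus_notin by auto
    qed
    have u: "rword xs \<in> W" using rword_simple_W[OF xs] .
    have "rword (a # xs @ [t]) v = rword xs v" for v
    proof -
      have "rword (a # xs @ [t]) v = refl (rword xs t) (rword xs (refl t v))"
        using \<open>?b = a\<close> by (simp add: rword_append)
      also have "\<dots> = rword xs v" using refl_conj[OF u] by simp
      finally show ?thesis .
    qed
    then show ?thesis using xs by (intro exI[of _ xs]) auto
  qed
qed

definition reduced :: "(real^'n) list \<Rightarrow> bool" where
  "reduced l \<longleftrightarrow> set l \<subseteq> D \<and> (\<forall>l'. set l' \<subseteq> D \<and> rword l' = rword l \<longrightarrow> length l \<le> length l')"

lemma reduced_exists: "w \<in> W \<Longrightarrow> \<exists>l. reduced l \<and> rword l = w"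
proof -
  assume "w \<in> W"
  then obtain l0 where "set l0 \<subseteq> D \<and> rword l0 = w" using W_eq_rword by metis
  then obtain l where l: "set l \<subseteq> D \<and> rword l = w"
    "\<forall>y. set y \<subseteq> D \<and> rword y = w \<longrightarrow> length l \<le> length y"
    using ex_has_least_nat[of "\<lambda>l. set l \<subseteq> D \<and> rword l = w" l0 length] by blast
  then show ?thesis unfolding reduced_def by metis
qed

lemma reduced_last_Rpos:
  assumes m: "reduced (xs @ [t])"
  shows "rword xs t \<in> Rpos"
proof (rule ccontr)
  assume nb: "rword xs t \<notin> Rpos"
  have xs: "set xs \<subseteq> D" and t: "t \<in> D" using m unfolding reduced_def by auto
  have "rword xs t \<in> R" using W_R[OF rword_simple_W[OF xs]] t D_subset_R by auto
  then have "- rword xs t \<in> Rpos" using nb R_pos_or_neg by blast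
  then obtain ys where "set ys \<subseteq> D" "length ys < length xs + 1" "rword ys = rword (xs @ [t])"
    using rword_exchange[OF xs t] by blast
  then show False using m unfolding reduced_def by fastforce
qed

lemma reduced_tl: "reduced (a # l) \<Longrightarrow> reduced l"
proof -
  assume m: "reduced (a # l)"
  have "length l \<le> length l'" if l': "set l' \<subseteq> D" "rword l' = rword l" for l'
  proof -
    have "set (a # l') \<subseteq> D" "rword (a # l') = rword (a # l)" using l' m unfolding reduced_def by auto
    then have "length (a # l) \<le> length (a # l')" using m unfolding reduced_def by blast
    then show ?thesis by simp
  qed
  then show ?thesis using m unfolding reduced_def by auto
qed

lemma rword_rev_eq: "rword l' = rword (rev l) \<Longrightarrow> rword (rev l') = rword l"
proof
  fix x assume h: "rword l' = rword (rev l)"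
  have "rword l' (rword l x) = x" using h rword_rev_cancel[of l x] by simp
  then have "rword (rev l') x = rword (rev l') (rword l' (rword l x))" by simp
  also have "\<dots> = rword l x" by (rule rword_rev_cancel)
  finally show "rword (rev l') x = rword l x" .
qed

lemma reduced_rev: "reduced l \<Longrightarrow> reduced (rev l)"
proof -
  assume m: "reduced l"
  have "length (rev l) \<le> length l'" if l': "set l' \<subseteq> D" "rword l' = rword (rev l)" for l'
  proof -
    have "set (rev l') \<subseteq> D" "rword (rev l') = rword l" using l' rword_rev_eq by auto
    then have "length l \<le> length (rev l')" using m unfolding reduced_def by blast
    then show ?thesis by simp
  qed
  then show ?thesis using m unfolding reduced_def by auto
qed

lemma W_preserving_Rpos_id:
  assumes w: "w \<in> W" and p: "\<forall>b\<in>Rpos. w b \<in> Rpos"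
  shows "w = id"
proof -
  obtain l where l: "reduced l" "rword l = w" using reduced_exists[OF w] by blast
  show ?thesis
  proof (cases l rule: rev_exhaust)
    case Nil then show ?thesis using l by simp
  next
    case (snoc xs t)
    have pos: "rword xs t \<in> Rpos" using reduced_last_Rpos l snoc by simp
    have xs: "set xs \<subseteq> D" and t: "t \<in> D" using l snoc unfolding reduced_def by auto
    have "t \<noteq> 0" using t zero_notin_D by auto
    have "w t = rword xs (refl t t)" using l(2)[symmetric] snoc by (simp add: rword_append)
    also have "\<dots> = rword xs (- t)" using \<open>t \<noteq> 0\<close> by (simp add: refl_self)
    also have "\<dots> = - rword xs t" using W_neg[OF rword_simple_W[OF xs]] by simp
    finally have "w t = - rword xs t" .
    moreover have "w t \<in> Rpos" using p D_Rpos t by auto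
    ultimately show ?thesis using pos Rpos_uminus_notin by auto
  qed
qed


section \<open>Dominance and the lattices\<close>

definition strictly_dominant :: "real^'n \<Rightarrow> bool" where "strictly_dominant v \<longleftrightarrow> (\<forall>a\<in>D. v \<bullet> a > 0)"

definition is_dominant :: "real^'n \<Rightarrow> bool" where "is_dominant v \<longleftrightarrow> (\<forall>a\<in>D. v \<bullet> a \<ge> 0)"

lemma dominant_inner_Rpos: "is_dominant v \<Longrightarrow> b \<in> Rpos \<Longrightarrow> v \<bullet> b \<ge> 0"
  unfolding inner_coord_expansion[of v b] is_dominant_def by (intro sum_nonneg) (simp add: Rpos_iff)

lemma strictly_dominant_inner_Rpos: "strictly_dominant v \<Longrightarrow> b \<in> Rpos \<Longrightarrow> v \<bullet> b > 0"
proof -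
  assume s: "strictly_dominant v" and b: "b \<in> Rpos"
  obtain a where a: "a \<in> D" "coord a b > 0" using Rpos_coord_pos b by blast
  have "(\<Sum>a\<in>D. coord a b * (v \<bullet> a)) > 0"
  proof (rule sum_pos2[OF finite_D a(1)])
    show "0 < coord a b * (v \<bullet> a)" using a s unfolding strictly_dominant_def by simp
    show "\<And>i. i \<in> D \<Longrightarrow> 0 \<le> coord i b * (v \<bullet> i)" using s b unfolding strictly_dominant_def Rpos_iff
      by (meson less_imp_le mult_nonneg_nonneg)
  qed
  then show ?thesis using inner_coord_expansion[of v b] by simp
qed

lemma strictly_dominant_imp_dominant: "strictly_dominant v \<Longrightarrow> is_dominant v"
  unfolding strictly_dominant_def is_dominant_def by force

lemma strictly_dominant_rho: "strictly_dominant \<rho>"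
  unfolding strictly_dominant_def using rho_inner_simple_pos by auto

lemma dominant_rho: "is_dominant \<rho>" using strictly_dominant_imp_dominant strictly_dominant_rho by blast

lemma strictly_dominant_stabilizer:
  assumes w: "w \<in> W" and s: "strictly_dominant v" "strictly_dominant (w v)"
  shows "w = id"
proof -
  have "\<forall>b\<in>Rpos. inv w b \<in> Rpos"
  proof
    fix b assume b: "b \<in> Rpos"
    have gR: "inv w b \<in> R" using W_R[OF W_inv[OF w]] b Rpos_R by auto
    show "inv w b \<in> Rpos"
    proof (rule ccontr)
      assume "inv w b \<notin> Rpos"
      then have "- inv w b \<in> Rpos" using gR R_pos_or_neg by blast
      then have "v \<bullet> (- inv w b) > 0" using strictly_dominant_inner_Rpos s(1) by blast
      moreover have "w v \<bullet> b > 0" using strictly_dominant_inner_Rpos s(2) b by blast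
      ultimately show False using W_inner_inv[OF w] by simp
    qed
  qed
  then have "inv w = id" using W_preserving_Rpos_id[OF W_inv[OF w]] by blast
  show ?thesis
  proof
    fix x
    have "w x = w (inv w x)" using \<open>inv w = id\<close> by simp
    also have "\<dots> = x" using w by simp
    finally show "w x = id x" by simp
  qed
qed

definition Qplus :: "(real^'n) set" where "Qplus = {v \<in> Q. \<forall>a\<in>D. coord a v \<ge> 0}"

lemma weight_lattice_iff: "v \<in> P \<longleftrightarrow> (\<forall>b\<in>R. copair v b \<in> \<int>)"
  by (simp add: weight_lattice_def copair_def)

lemma root_lattice_iff_coords: "v \<in> Q \<longleftrightarrow> (\<forall>a\<in>D. coord a v \<in> \<int>)"
proof
  assume q: "\<forall>a\<in>D. coord a v \<in> \<int>"
  define c where "c a = (if a \<in> D then floor (coord a v) else 0)" for a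
  have ca: "of_int (c a) = (if a \<in> D then coord a v else 0)" for a
    using q unfolding c_def by (auto elim: Ints_cases)
  have "v = (\<Sum>a\<in>D. coord a v *\<^sub>R a)" by (rule coord_expansion)
  also have "\<dots> = (\<Sum>a\<in>R. (if a \<in> D then coord a v else 0) *\<^sub>R a)"
    using D_subset_R finite_R by (intro sum.mono_neutral_cong_left) auto
  also have "\<dots> = (\<Sum>a\<in>R. of_int (c a) *\<^sub>R a)" by (simp add: ca)
  finally show "v \<in> Q" unfolding root_lattice_def by blast
next
  assume "v \<in> Q"
  then obtain c :: "real^'n \<Rightarrow> int" where v: "v = (\<Sum>a\<in>R. of_int (c a) *\<^sub>R a)"
    unfolding root_lattice_def by blast
  show "\<forall>a\<in>D. coord a v \<in> \<int>" unfolding v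
    using coord_R by (auto simp: coord_sum coord_scale intro!: Ints_sum Ints_mult)
qed

lemma Q_add: "u \<in> Q \<Longrightarrow> v \<in> Q \<Longrightarrow> u + v \<in> Q"
  by (simp add: root_lattice_iff_coords coord_add)

lemma Q_diff: "u \<in> Q \<Longrightarrow> v \<in> Q \<Longrightarrow> u - v \<in> Q"
  by (simp add: root_lattice_iff_coords coord_diff)

lemma Q_uminus: "u \<in> Q \<Longrightarrow> - u \<in> Q"
  by (simp add: root_lattice_iff_coords coord_neg)

lemma Q_zero: "0 \<in> Q" by (simp add: root_lattice_iff_coords coord_zero)

lemma R_Q: "b \<in> R \<Longrightarrow> b \<in> Q" using coord_R by (simp add: root_lattice_iff_coords)

lemma Q_scale_Ints: "u \<in> Q \<Longrightarrow> c \<in> \<int> \<Longrightarrow> c *\<^sub>R u \<in> Q"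
  by (simp add: root_lattice_iff_coords coord_scale)

lemma Q_copair_Ints: "v \<in> Q \<Longrightarrow> b \<in> R \<Longrightarrow> copair v b \<in> \<int>"
  unfolding copair_coord_expansion[of v b] root_lattice_iff_coords using D_subset_R copair_R_Ints by (intro Ints_sum Ints_mult) auto

lemma Q_P: "v \<in> Q \<Longrightarrow> v \<in> P"
  using Q_copair_Ints weight_lattice_iff by auto

lemma P_add: "u \<in> P \<Longrightarrow> v \<in> P \<Longrightarrow> u + v \<in> P"
  by (simp add: weight_lattice_iff copair_add)

lemma P_diff: "u \<in> P \<Longrightarrow> v \<in> P \<Longrightarrow> u - v \<in> P"
  by (simp add: weight_lattice_iff copair_diff)

lemma P_W: "v \<in> P \<Longrightarrow> w \<in> W \<Longrightarrow> w v \<in> P"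
proof -
  assume v: "v \<in> P" and w: "w \<in> W"
  show "w v \<in> P" unfolding weight_lattice_iff
  proof
    fix b assume b: "b \<in> R"
    have "copair (w v) b = copair (inv w (w v)) (inv w b)" using W_copair[OF W_inv[OF w]] by simp
    also have "\<dots> = copair v (inv w b)" using w by simp
    finally show "copair (w v) b \<in> \<int>" using v W_R[OF W_inv[OF w] b] unfolding weight_lattice_iff by simp
  qed
qed

lemma Qplus_add: "u \<in> Qplus \<Longrightarrow> v \<in> Qplus \<Longrightarrow> u + v \<in> Qplus"
  by (simp add: Qplus_def Q_add coord_add)

lemma Qplus_zero: "0 \<in> Qplus" by (simp add: Qplus_def Q_zero coord_zero)

lemma Qplus_height_nonneg: "v \<in> Qplus \<Longrightarrow> height v \<ge> 0"
  unfolding height_def Qplus_def by (rule sum_nonneg) simp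

lemma Qplus_height_zero: "v \<in> Qplus \<Longrightarrow> height v = 0 \<Longrightarrow> v = 0"
proof -
  assume q: "v \<in> Qplus" and h: "height v = 0"
  have "\<forall>a\<in>D. coord a v = 0"
    using h q unfolding height_def Qplus_def by (simp add: sum_nonneg_eq_0_iff[OF finite_D])
  then show "v = 0" using eq_iff_coords[of v 0] by (simp add: coord_zero)
qed

lemma Qplus_antisym: "u \<in> Qplus \<Longrightarrow> v \<in> Qplus \<Longrightarrow> u + v = 0 \<Longrightarrow> u = 0"
proof -
  assume q: "u \<in> Qplus" "v \<in> Qplus" and s: "u + v = 0"
  then have "v = - u" by (metis add_eq_0_iff)
  then have "height v = - height u" using height_scale[of "-1" u] by simp
  then have "height u = 0" using Qplus_height_nonneg[OF q(1)] Qplus_height_nonneg[OF q(2)] by simp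
  then show "u = 0" using Qplus_height_zero q(1) by blast
qed

lemma Qplus_height_ge_1: "v \<in> Qplus \<Longrightarrow> v \<noteq> 0 \<Longrightarrow> height v \<ge> 1"
proof -
  assume q: "v \<in> Qplus" and v: "v \<noteq> 0"
  then obtain a where a: "a \<in> D" "coord a v \<noteq> 0" using eq_iff_coords[of v 0] by (auto simp: coord_zero)
  have "coord a v \<in> \<int>" using q a unfolding Qplus_def root_lattice_iff_coords by auto
  then obtain m where m: "coord a v = of_int m" by (auto elim: Ints_cases)
  have "coord a v \<ge> 0" using q a unfolding Qplus_def by auto
  then have "coord a v \<ge> 1" using m a(2) by simp
  moreover have "(\<Sum>b\<in>D - {a}. coord b v) \<ge> 0" using q unfolding Qplus_def by (intro sum_nonneg) auto
  moreover have "height v = coord a v + (\<Sum>b\<in>D - {a}. coord b v)" unfolding height_def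
    using a(1) finite_D by (simp add: sum.remove)
  ultimately show ?thesis by linarith
qed

definition orbit :: "real^'n \<Rightarrow> (real^'n) set" where "orbit lam = (\<lambda>w. w lam) ` W"

lemma finite_orbit: "finite (orbit lam)" unfolding orbit_def using W_finite by simp

lemma orbit_self: "lam \<in> orbit lam"
  unfolding orbit_def by (rule image_eqI[of _ _ id]) (simp_all add: weyl_group.id)

lemma orbit_W: "w \<in> W \<Longrightarrow> w nu \<in> orbit lam \<longleftrightarrow> nu \<in> orbit lam"
proof
  assume w: "w \<in> W" and "w nu \<in> orbit lam"
  then obtain u where u: "u \<in> W" "w nu = u lam" unfolding orbit_def by auto
  then have "nu = (inv w \<circ> u) lam" using w by (metis W_apply_inv comp_apply)
  then show "nu \<in> orbit lam" unfolding orbit_def using W_comp[OF W_inv[OF w] u(1)] by blast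
next
  assume w: "w \<in> W" and "nu \<in> orbit lam"
  then obtain u where u: "u \<in> W" "nu = u lam" unfolding orbit_def by auto
  then have e: "w nu = (w \<circ> u) lam" by simp
  show "w nu \<in> orbit lam" unfolding orbit_def image_iff using W_comp[OF w u(1)] e by blast
qed

lemma orbit_P: "lam \<in> P \<Longrightarrow> k \<in> orbit lam \<Longrightarrow> k \<in> P"
  unfolding orbit_def using P_W by blast

lemma rho_sub_rword_Q: "set l \<subseteq> D \<Longrightarrow> \<rho> - rword l \<rho> \<in> Q"
proof (induction l)
  case Nil then show ?case by (simp add: Q_zero)
next
  case (Cons a l)
  let ?u = "rword l"
  have a: "a \<in> D" and l: "set l \<subseteq> D" using Cons.prems by auto
  have eq: "\<rho> - rword (a # l) \<rho> = (\<rho> - ?u \<rho>) + copair (?u \<rho>) a *\<^sub>R a" by (simp add: refl_copair)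
  have "copair (?u \<rho>) a = copair \<rho> a - copair (\<rho> - ?u \<rho>) a" by (simp add: copair_diff)
  also have "\<dots> = 1 - copair (\<rho> - ?u \<rho>) a" using copair_rho_simple[OF a] by simp
  finally have "copair (?u \<rho>) a \<in> \<int>" using Q_copair_Ints[OF Cons.IH[OF l]] a D_subset_R by auto
  then have "copair (?u \<rho>) a *\<^sub>R a \<in> Q" using Q_scale_Ints[OF R_Q] a D_subset_R by auto
  moreover have "\<rho> - ?u \<rho> \<in> Q" using Cons l by auto
  ultimately show ?case unfolding eq by (rule Q_add[rotated])
qed

lemma rho_P: "\<rho> \<in> P"
  unfolding weight_lattice_iff
proof
  fix b assume b: "b \<in> R"
  then obtain l al where l: "set l \<subseteq> D" "al \<in> D" "b = rword l al" using R_conj_simple by blast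
  have "copair \<rho> b = copair (rword (rev l) \<rho>) (rword (rev l) b)"
    using W_copair[OF rword_simple_W[of "rev l"]] l by simp
  also have "\<dots> = copair (rword (rev l) \<rho>) al" using l(3) by (simp add: rword_rev_cancel)
  also have "\<dots> = copair \<rho> al - copair (\<rho> - rword (rev l) \<rho>) al" by (simp add: copair_diff)
  also have "\<dots> = 1 - copair (\<rho> - rword (rev l) \<rho>) al" using copair_rho_simple[OF l(2)] by simp
  finally show "copair \<rho> b \<in> \<int>"
    using Q_copair_Ints[OF rho_sub_rword_Q[of "rev l"]] l D_subset_R by auto
qed

lemma dominant_sub_rword_Qplus: "v \<in> P \<Longrightarrow> is_dominant v \<Longrightarrow> reduced l \<Longrightarrow> v - rword l v \<in> Qplus"
proof (induction l)
  case Nil then show ?case by (simp add: Qplus_zero)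
next
  case (Cons a l)
  let ?u = "rword l"
  have m: "reduced l" using reduced_tl Cons.prems by blast
  have a: "a \<in> D" and l: "set l \<subseteq> D" using Cons.prems unfolding reduced_def by auto
  have "reduced (rev l @ [a])" using reduced_rev[OF Cons.prems(3)] by simp
  then have g: "rword (rev l) a \<in> Rpos" by (rule reduced_last_Rpos)
  have eq: "v - rword (a # l) v = (v - ?u v) + copair (?u v) a *\<^sub>R a" by (simp add: refl_copair)
  have "copair (?u v) a = copair (rword (rev l) (?u v)) (rword (rev l) a)"
    using W_copair[OF rword_simple_W[of "rev l"]] l by simp
  also have "\<dots> = copair v (rword (rev l) a)" by (simp add: rword_rev_cancel)
  finally have c: "copair (?u v) a = copair v (rword (rev l) a)" .
  have ci: "copair (?u v) a \<in> \<int>" using c Cons.prems(1) g Rpos_R unfolding weight_lattice_iff by auto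
  have "v \<bullet> rword (rev l) a \<ge> 0" using dominant_inner_Rpos[OF Cons.prems(2) g] .
  moreover have "rword (rev l) a \<bullet> rword (rev l) a > 0" using g Rpos_R zero_notin_R by (metis inner_gt_zero_iff)
  ultimately have "copair v (rword (rev l) a) \<ge> 0" unfolding copair_def by simp
  then have cn: "copair (?u v) a \<ge> 0" using c by simp
  have "copair (?u v) a *\<^sub>R a \<in> Qplus" unfolding Qplus_def
    using ci cn a R_Q D_subset_R by (auto simp: Q_scale_Ints coord_scale coord_D)
  then show ?case unfolding eq using Cons.IH[OF Cons.prems(1,2) m] by (rule Qplus_add[rotated])
qed

lemma dominant_sub_W_Qplus: "v \<in> P \<Longrightarrow> is_dominant v \<Longrightarrow> w \<in> W \<Longrightarrow> v - w v \<in> Qplus"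
  using reduced_exists dominant_sub_rword_Qplus by metis

lemma dominant_sub_orbit_Qplus: "v \<in> P \<Longrightarrow> is_dominant v \<Longrightarrow> k \<in> orbit v \<Longrightarrow> v - k \<in> Qplus"
  unfolding orbit_def using dominant_sub_W_Qplus by blast

lemma W_conj_dominant: "\<exists>w\<in>W. is_dominant (w v)"
proof -
  let ?f = "\<lambda>w. w v \<bullet> \<rho>"
  have ne: "?f ` W \<noteq> {}" using weyl_group.id by blast
  have fin: "finite (?f ` W)" using W_finite by simp
  obtain w where w: "w \<in> W" "?f w = Max (?f ` W)" using Max_in[OF fin ne] by auto
  have "is_dominant (w v)" unfolding is_dominant_def
  proof
    fix a assume a: "a \<in> D"
    show "w v \<bullet> a \<ge> 0"
    proof (rule ccontr)
      assume "\<not> ?thesis"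
      then have neg: "w v \<bullet> a < 0" by simp
      have rw: "refl a \<circ> w \<in> W" using weyl_group.step[OF w(1)] a D_subset_R by auto
      have "?f (refl a \<circ> w) = w v \<bullet> refl a \<rho>" by (simp add: refl_adj)
      also have "\<dots> = ?f w - w v \<bullet> a" using refl_simple_rho[OF a] by (simp add: inner_diff_right)
      finally have "?f (refl a \<circ> w) > ?f w" using neg by simp
      moreover have "?f (refl a \<circ> w) \<in> ?f ` W" using rw by (rule imageI)
      then have "?f (refl a \<circ> w) \<le> Max (?f ` W)" using Max_ge[OF fin] by blast
      then have "?f (refl a \<circ> w) \<le> ?f w" using w(2) by simp
      ultimately show False by simp
    qed
  qed
  then show ?thesis using w by blast
qed

lemma strictly_dominant_sub_rho: "v \<in> P \<Longrightarrow> strictly_dominant v \<Longrightarrow> is_dominant (v - \<rho>)"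
proof -
  assume wv: "v \<in> P" and s: "strictly_dominant v"
  show "is_dominant (v - \<rho>)" unfolding is_dominant_def
  proof
    fix a assume a: "a \<in> D"
    have aa: "a \<bullet> a > 0" using a zero_notin_D by (metis inner_gt_zero_iff)
    have "copair v a \<in> \<int>" using wv a D_subset_R unfolding weight_lattice_iff by auto
    moreover have "copair v a > 0" using s a aa unfolding strictly_dominant_def copair_def by simp
    ultimately have "copair v a \<ge> 1" by (auto elim!: Ints_cases)
    then have "copair (v - \<rho>) a \<ge> 0" using copair_rho_simple[OF a] by (simp add: copair_diff)
    then show "(v - \<rho>) \<bullet> a \<ge> 0" using aa unfolding copair_def by (simp add: zero_le_divide_iff)
  qed
qed

definition rho_gap :: real where "rho_gap = Min ((\<lambda>a. \<rho> \<bullet> a) ` D)"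

lemma rho_gap_pos: "rho_gap > 0"
  unfolding rho_gap_def using finite_D D_nonempty rho_inner_simple_pos by (subst Min_gr_iff) auto

lemma rho_gap_le: "a \<in> D \<Longrightarrow> rho_gap \<le> \<rho> \<bullet> a"
  unfolding rho_gap_def using finite_D by (intro Min_le) auto

lemma dominant_inner_rho: "is_dominant v \<Longrightarrow> v \<bullet> \<rho> \<ge> 0"
proof -
  assume d: "is_dominant v"
  have "v \<bullet> \<rho> = (1/2) * (\<Sum>b\<in>Rpos. v \<bullet> b)" unfolding rho_def by (simp add: inner_sum_right)
  moreover have "(\<Sum>b\<in>Rpos. v \<bullet> b) \<ge> 0" using dominant_inner_Rpos[OF d] by (intro sum_nonneg) auto
  ultimately show ?thesis by simp
qed

lemma Qplus_inner_rho: "q \<in> Qplus \<Longrightarrow> q \<noteq> 0 \<Longrightarrow> q \<bullet> \<rho> \<ge> rho_gap"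
proof -
  assume q: "q \<in> Qplus" "q \<noteq> 0"
  have "q \<bullet> \<rho> = (\<Sum>a\<in>D. coord a q * (\<rho> \<bullet> a))" using inner_coord_expansion[of \<rho> q] by (simp add: inner_commute)
  also have "\<dots> \<ge> (\<Sum>a\<in>D. coord a q * rho_gap)"
    using q(1) rho_gap_le unfolding Qplus_def by (intro sum_mono mult_left_mono) auto
  also have "(\<Sum>a\<in>D. coord a q * rho_gap) = height q * rho_gap" by (simp add: height_def sum_distrib_right)
  finally have "q \<bullet> \<rho> \<ge> height q * rho_gap" .
  moreover have "height q \<ge> 1" using Qplus_height_ge_1 q by blast
  ultimately show ?thesis using rho_gap_pos by (smt (verit) mult_right_mono mult_cancel_right1)
qed

definition rho_level :: "real^'n \<Rightarrow> nat" where "rho_level lam = nat (floor ((lam \<bullet> \<rho>) / rho_gap))"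

lemma rho_level_less:
  assumes d: "is_dominant lam'" and q: "lam - lam' \<in> Qplus" and ne: "lam' \<noteq> lam"
  shows "rho_level lam' < rho_level lam"
proof -
  have "lam - lam' \<noteq> 0" using ne by simp
  then have "(lam - lam') \<bullet> \<rho> \<ge> rho_gap" using Qplus_inner_rho q by blast
  then have "lam' \<bullet> \<rho> \<le> lam \<bullet> \<rho> - rho_gap" by (simp add: inner_diff_left)
  then have "(lam' \<bullet> \<rho>) / rho_gap \<le> (lam \<bullet> \<rho>) / rho_gap - 1" using rho_gap_pos by (simp add: field_simps)
  moreover have "(lam' \<bullet> \<rho>) / rho_gap \<ge> 0" using dominant_inner_rho[OF d] rho_gap_pos by simp
  ultimately have "floor ((lam' \<bullet> \<rho>) / rho_gap) \<le> floor ((lam \<bullet> \<rho>) / rho_gap) - 1"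
    "floor ((lam' \<bullet> \<rho>) / rho_gap) \<ge> 0"
    using floor_mono[of "(lam' \<bullet> \<rho>) / rho_gap" "(lam \<bullet> \<rho>) / rho_gap - 1"] by auto
  then show ?thesis unfolding rho_level_def by linarith
qed


section \<open>Alternating elements\<close>

definition W_invariant :: "'n gring \<Rightarrow> bool" where "W_invariant f \<longleftrightarrow> (\<forall>w\<in>W. \<forall>v. lookup f (w v) = lookup f v)"

definition alternating :: "'n gring \<Rightarrow> bool" where "alternating g \<longleftrightarrow> (\<forall>w\<in>W. \<forall>v. lookup g (w v) = wsgn w * lookup g v)"

lemma lookup_pushforward_W: "u \<in> W \<Longrightarrow> lookup (pushforward u h) v = lookup h (inv u v)"
proof -
  assume u: "u \<in> W"
  have "lookup (pushforward u h) v = lookup (pushforward u h) (u (inv u v))" using u by simp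
  also have "\<dots> = lookup h (inv u v)" using lookup_pushforward_inj[of u] W_bij[OF u] bij_is_inj by blast
  finally show ?thesis .
qed

lemma lookup_W_pushforward: "w \<in> W \<Longrightarrow> lookup h (w v) = lookup (pushforward (inv w) h) v"
  using lookup_pushforward_W[OF W_inv, of w h v] W_inv_inv[of w] by simp

lemma pushforward_W_mult: "u \<in> W \<Longrightarrow> pushforward u (f * g) = pushforward u f * pushforward u (g :: 'n gring)"
  by (rule pushforward_mult) (rule W_add)

lemma alternating_mult: "W_invariant f \<Longrightarrow> alternating g \<Longrightarrow> alternating (f * g)"
  unfolding alternating_def
proof (intro ballI allI)
  fix w v assume f: "W_invariant f" and g: "\<forall>w\<in>W. \<forall>v. lookup g (w v) = wsgn w * lookup g v" and w: "w \<in> W"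
  let ?u = "inv w"
  have u: "?u \<in> W" using W_inv[OF w] .
  have pf: "pushforward ?u f = f"
    by (rule poly_mapping_eqI) (simp add: lookup_pushforward_W[OF u] W_inv_inv[OF w] w f[unfolded W_invariant_def])
  have pg: "pushforward ?u g = scal (wsgn w) g"
    by (rule poly_mapping_eqI) (simp add: lookup_pushforward_W[OF u] W_inv_inv[OF w] w g lookup_scal)
  have "lookup (f * g) (w v) = lookup (pushforward ?u (f * g)) v" using lookup_W_pushforward[OF w] .
  also have "\<dots> = lookup (f * scal (wsgn w) g) v" using pushforward_W_mult[OF u] pf pg by simp
  also have "\<dots> = wsgn w * lookup (f * g) v" by (simp add: scal_mult[symmetric] lookup_scal)
  finally show "lookup (f * g) (w v) = wsgn w * lookup (f * g) v" .
qed

lemma alternating_add: "alternating f \<Longrightarrow> alternating g \<Longrightarrow> alternating (f + g)"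
  by (simp add: alternating_def lookup_add distrib_left)

lemma alternating_scal: "alternating f \<Longrightarrow> alternating (scal c f)"
  by (simp add: alternating_def lookup_scal mult.left_commute)

lemma alternating_zero: "alternating 0" by (simp add: alternating_def)

lemma alternating_sum: "(\<And>i. i \<in> I \<Longrightarrow> alternating (F i)) \<Longrightarrow> alternating (sum F I)"
  by (induction I rule: infinite_finite_induct) (auto simp: alternating_zero alternating_add)

lemma W_invariant_add: "W_invariant f \<Longrightarrow> W_invariant g \<Longrightarrow> W_invariant (f + g)"
  by (simp add: W_invariant_def lookup_add)

lemma W_invariant_diff: "W_invariant f \<Longrightarrow> W_invariant g \<Longrightarrow> W_invariant (f - g)"
  by (simp add: W_invariant_def lookup_minus)

lemma W_invariant_scal: "W_invariant f \<Longrightarrow> W_invariant (scal c f)"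
  by (simp add: W_invariant_def lookup_scal)

lemma W_invariant_zero: "W_invariant 0" by (simp add: W_invariant_def)

lemma W_invariant_sum: "(\<And>i. i \<in> I \<Longrightarrow> W_invariant (F i)) \<Longrightarrow> W_invariant (sum F I)"
  by (induction I rule: infinite_finite_induct) (auto simp: W_invariant_zero W_invariant_add)

lemma alt_term: "scal (wsgn w) (gexp (w mu)) = single (w mu) (wsgn w)"
  by (simp add: gexp_def scal_sg)

lemma lookup_alt: "lookup (alt R mu) nu = (\<Sum>w\<in>W. if w mu = nu then wsgn w else 0)"
  unfolding alt_def by (simp add: lookup_sum alt_term lookup_single when_def)

lemma keys_alt: "keys (alt R mu) \<subseteq> orbit mu"
proof
  fix b assume b: "b \<in> keys (alt R mu)"
  show "b \<in> orbit mu"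
  proof (rule ccontr)
    assume "b \<notin> orbit mu"
    then have "lookup (alt R mu) b = 0" unfolding lookup_alt orbit_def by (intro sum.neutral) auto
    then show False using b by (simp add: in_keys_iff)
  qed
qed

lemma alternating_alt: "alternating (alt R mu)"
  unfolding alternating_def
proof (intro ballI allI)
  fix u nu assume u: "u \<in> W"
  have "lookup (alt R mu) (u nu) = (\<Sum>w\<in>W. if w mu = u nu then wsgn w else 0)" by (rule lookup_alt)
  also have "\<dots> = (\<Sum>w\<in>W. if (u \<circ> w) mu = u nu then wsgn (u \<circ> w) else 0)"
    using sum.reindex_bij_betw[OF W_comp_bij[OF u], of "\<lambda>w. if w mu = u nu then wsgn w else 0"] by simp
  also have "\<dots> = (\<Sum>w\<in>W. wsgn u * (if w mu = nu then wsgn w else 0))"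
    by (rule sum.cong) (auto simp: W_inj[OF u] wsgn_mult[OF u])
  also have "\<dots> = wsgn u * lookup (alt R mu) nu" by (simp add: lookup_alt sum_distrib_left)
  finally show "lookup (alt R mu) (u nu) = wsgn u * lookup (alt R mu) nu" .
qed

lemma lookup_alt_strictly_dominant: "strictly_dominant mu \<Longrightarrow> strictly_dominant nu \<Longrightarrow> lookup (alt R mu) nu = (if mu = nu then 1 else 0)"
proof -
  assume s: "strictly_dominant mu" "strictly_dominant nu"
  have "lookup (alt R mu) nu = (\<Sum>w\<in>W. if w = id then (if mu = nu then 1 else 0) else 0)"
    unfolding lookup_alt
  proof (rule sum.cong)
    fix w assume w: "w \<in> W"
    show "(if w mu = nu then wsgn w else 0) = (if w = id then (if mu = nu then 1 else 0) else 0)"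
      using strictly_dominant_stabilizer[OF w s(1)] s(2) by auto
  qed simp
  also have "\<dots> = (if mu = nu then 1 else 0)" using W_finite weyl_group.id[of R] by simp
  finally show ?thesis .
qed

lemma alternating_lookup_wall: "alternating g \<Longrightarrow> b \<in> R \<Longrightarrow> v \<bullet> b = 0 \<Longrightarrow> lookup g v = 0"
proof -
  assume g: "alternating g" and b: "b \<in> R" and vb: "v \<bullet> b = 0"
  have b0: "b \<noteq> 0" using b zero_notin_R by auto
  have e: "lookup g (refl b v) = wsgn (refl b) * lookup g v" using g refl_W[OF b] unfolding alternating_def by blast
  have "lookup g v = lookup g (refl b v)" using refl_orth[OF vb] by simp
  also have "\<dots> = - lookup g v" unfolding e wsgn_refl[OF b0] by simp
  finally have "lookup g v = - lookup g v" .
  then show ?thesis by (rule fract_eq_uminus_imp_zero)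
qed

lemma alternating_lookup_back: "alternating g \<Longrightarrow> w \<in> W \<Longrightarrow> lookup g v = wsgn w * lookup g (w v)"
proof -
  assume g: "alternating g" and w: "w \<in> W"
  have "lookup g (w v) = wsgn w * lookup g v" using g w unfolding alternating_def by blast
  then have "wsgn w * lookup g (w v) = (wsgn w * wsgn w) * lookup g v" by (simp only: mult.assoc)
  also have "\<dots> = lookup g v" by (simp only: wsgn_sq mult_1)
  finally show ?thesis by (rule sym)
qed

lemma alternating_decomp:
  assumes g: "alternating g"
  shows "g = (\<Sum>mu\<in>{mu\<in>keys g. strictly_dominant mu}. scal (lookup g mu) (alt R mu))"
proof (rule poly_mapping_eqI)
  fix nu
  let ?S = "{mu\<in>keys g. strictly_dominant mu}"
  let ?h = "\<Sum>mu\<in>?S. scal (lookup g mu) (alt R mu)"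
  have fS: "finite ?S" by simp
  have h: "alternating ?h" by (intro alternating_sum alternating_scal alternating_alt)
  have key: "lookup g v = lookup ?h v" if d: "is_dominant v" for v
  proof (cases "strictly_dominant v")
    case True
    have "lookup ?h v = (\<Sum>mu\<in>?S. lookup g mu * lookup (alt R mu) v)"
      by (simp only: lookup_sum lookup_scal)
    also have "\<dots> = (\<Sum>mu\<in>?S. lookup g mu * (if mu = v then 1 else 0))"
      by (rule sum.cong) (auto simp only: lookup_alt_strictly_dominant True mem_Collect_eq)
    also have "\<dots> = (\<Sum>mu\<in>?S. if mu = v then lookup g mu else 0)" by (rule sum.cong) auto
    also have "\<dots> = lookup g v" using fS True by (simp add: in_keys_iff)
    finally show ?thesis by simp
  next
    case False
    then obtain a where a: "a \<in> D" "v \<bullet> a = 0" using d unfolding is_dominant_def strictly_dominant_def by force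
    have "a \<in> R" using a D_subset_R by auto
    then have "lookup g v = 0" "lookup ?h v = 0" using alternating_lookup_wall[OF g] alternating_lookup_wall[OF h] a by blast+
    then show ?thesis by simp
  qed
  obtain w where w: "w \<in> W" "is_dominant (w nu)" using W_conj_dominant by blast
  have "lookup g nu = wsgn w * lookup g (w nu)" using alternating_lookup_back[OF g w(1)] .
  also have "\<dots> = wsgn w * lookup ?h (w nu)" using key[OF w(2)] by simp
  also have "\<dots> = lookup ?h nu" using alternating_lookup_back[OF h w(1), of nu] by (rule sym)
  finally show "lookup g nu = lookup ?h nu" .
qed

lemma orbit_inner_le: "w \<in> W \<Longrightarrow> w v \<bullet> v \<le> v \<bullet> v"
proof -
  assume w: "w \<in> W"
  have "w v \<bullet> v \<le> norm (w v) * norm v" by (rule norm_cauchy_schwarz)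
  also have "norm (w v) = norm v" using W_inner[OF w] by (simp add: norm_eq_sqrt_inner)
  finally show ?thesis by (simp add: power2_norm_eq_inner[symmetric] power2_eq_square)
qed

lemma orbit_inner_eq: "w \<in> W \<Longrightarrow> w v \<bullet> v = v \<bullet> v \<Longrightarrow> w v = v"
proof -
  assume w: "w \<in> W" and e: "w v \<bullet> v = v \<bullet> v"
  have "(w v - v) \<bullet> (w v - v) = w v \<bullet> w v - 2 * (w v \<bullet> v) + v \<bullet> v"
    by (simp add: inner_diff_left inner_diff_right inner_commute)
  also have "\<dots> = 0" using W_inner[OF w] e by simp
  finally show ?thesis by simp
qed

lemma alt_rho_cancel:
  assumes "f * alt R \<rho> = 0"
  shows "f = 0"
proof (rule ccontr)
  assume "f \<noteq> 0"
  \<comment> \<open>A key of f maximising the pairing with \<rho> contributes alone to f * alt R \<rho>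
    at a + \<rho>, because \<rho> is the unique point of its orbit maximising that pairing.\<close>
  then have "(\<lambda>k. k \<bullet> \<rho>) ` keys f \<noteq> {}" by simp
  then obtain a where a: "a \<in> keys f" "a \<bullet> \<rho> = Max ((\<lambda>k. k \<bullet> \<rho>) ` keys f)"
    using Max_in[OF finite_imageI[OF finite_keys]] by (metis imageE)
  then have a_max: "k \<bullet> \<rho> \<le> a \<bullet> \<rho>" if "k \<in> keys f" for k
    using that by simp
  have "lookup (f * alt R \<rho>) (a + \<rho>) = lookup f a * lookup (alt R \<rho>) \<rho>"
  proof (rule lookup_mult_unique_decomp)
    fix k b assume k: "k \<in> keys f" and b: "b \<in> keys (alt R \<rho>)" and kb: "k + b = a + \<rho>"
    obtain w where w: "w \<in> W" "w \<rho> = b" using keys_alt b unfolding orbit_def by blast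
    have "k \<bullet> \<rho> + b \<bullet> \<rho> = a \<bullet> \<rho> + \<rho> \<bullet> \<rho>"
      using arg_cong[OF kb, of "\<lambda>v. v \<bullet> \<rho>"] by (simp add: inner_add_left)
    moreover have "b \<bullet> \<rho> \<le> \<rho> \<bullet> \<rho>" using orbit_inner_le[OF w(1), of \<rho>] w(2) by simp
    ultimately have "b \<bullet> \<rho> = \<rho> \<bullet> \<rho>" using a_max[OF k] by linarith
    then have "b = \<rho>" using orbit_inner_eq[OF w(1), of \<rho>] w(2) by simp
    then show "k = a \<and> b = \<rho>" using kb by simp
  qed
  also have "\<dots> = lookup f a"
    using lookup_alt_strictly_dominant[OF strictly_dominant_rho strictly_dominant_rho] by simp
  finally show False using assms a(1) by (simp add: in_keys_iff)
qed

lemma character_eq: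
  assumes "f * alt R \<rho> = alt R (lam + \<rho>)"
  shows "character R D lam = f"
  unfolding character_def
proof (rule the_equality)
  show "f * alt R \<rho> = alt R (lam + \<rho>)" by fact
  fix f' assume "f' * alt R \<rho> = alt R (lam + \<rho>)"
  then have "(f' - f) * alt R \<rho> = 0" using assms by (simp add: left_diff_distrib)
  then show "f' = f" using alt_rho_cancel[of "f' - f"] by simp
qed


section \<open>Existence of characters\<close>

definition orbit_sum :: "real^'n \<Rightarrow> 'n gring" where "orbit_sum lam = (\<Sum>nu\<in>orbit lam. gexp nu)"

lemma lookup_orbit_sum: "lookup (orbit_sum lam) nu = (if nu \<in> orbit lam then 1 else 0)"
  unfolding orbit_sum_def gexp_def using finite_orbit by (simp add: lookup_sum lookup_single when_def)

lemma W_invariant_orbit_sum: "W_invariant (orbit_sum lam)"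
  unfolding W_invariant_def lookup_orbit_sum using orbit_W by simp

lemma keys_orbit_sum: "keys (orbit_sum lam) \<subseteq> orbit lam"
  by (auto simp: in_keys_iff lookup_orbit_sum split: if_splits)

lemma lookup_orbit_sum_alt_top:
  assumes lam: "lam \<in> P" "is_dominant lam"
  shows "lookup (orbit_sum lam * alt R \<rho>) (lam + \<rho>) = 1"
proof -
  have "lookup (orbit_sum lam * alt R \<rho>) (lam + \<rho>) = lookup (orbit_sum lam) lam * lookup (alt R \<rho>) \<rho>"
  proof (rule lookup_mult_unique_decomp)
    fix k b assume k: "k \<in> keys (orbit_sum lam)" and b: "b \<in> keys (alt R \<rho>)"
      and kb: "k + b = lam + \<rho>"
    have "lam - k \<in> Qplus" using dominant_sub_orbit_Qplus[OF lam] keys_orbit_sum k by blast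
    moreover have "\<rho> - b \<in> Qplus"
      using dominant_sub_orbit_Qplus[OF rho_P dominant_rho] keys_alt b by blast
    moreover have "(lam - k) + (\<rho> - b) = 0" using kb by (simp add: algebra_simps)
    ultimately have "lam - k = 0" using Qplus_antisym by blast
    then show "k = lam \<and> b = \<rho>" using kb by simp
  qed
  also have "\<dots> = 1"
    using orbit_self lookup_alt_strictly_dominant[OF strictly_dominant_rho strictly_dominant_rho]
    by (simp add: lookup_orbit_sum)
  finally show ?thesis .
qed

lemma strictly_dominant_keys_orbit_sum_alt:
  assumes lam: "lam \<in> P" "is_dominant lam"
    and mu: "mu \<in> keys (orbit_sum lam * alt R \<rho>)" "strictly_dominant mu"
  shows "mu - \<rho> \<in> P" "is_dominant (mu - \<rho>)" "lam - (mu - \<rho>) \<in> Qplus"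
proof -
  obtain k b where k: "k \<in> orbit lam" and b: "b \<in> orbit \<rho>" and mu_eq: "mu = k + b"
    using keys_mult[of "orbit_sum lam"] mu(1) keys_orbit_sum keys_alt by blast
  have "mu \<in> P" using mu_eq P_add orbit_P[OF lam(1) k] orbit_P[OF rho_P b] by simp
  then show "mu - \<rho> \<in> P" "is_dominant (mu - \<rho>)"
    using P_diff rho_P strictly_dominant_sub_rho mu(2) by auto
  have "lam - (mu - \<rho>) = (lam - k) + (\<rho> - b)" using mu_eq by (simp add: algebra_simps)
  then show "lam - (mu - \<rho>) \<in> Qplus"
    using Qplus_add[OF dominant_sub_orbit_Qplus[OF lam k] dominant_sub_orbit_Qplus[OF rho_P dominant_rho b]]
    by (simp only:)
qed

definition char_solution :: "real^'n \<Rightarrow> 'n gring \<Rightarrow> bool" where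
  "char_solution lam chi \<longleftrightarrow>
     W_invariant chi \<and> (\<forall>k\<in>keys chi. k - lam \<in> Q) \<and> chi * alt R \<rho> = alt R (lam + \<rho>)"

lemma orbit_sum_alt_decomp:
  fixes lam :: "real^'n"
  defines "g \<equiv> orbit_sum lam * alt R \<rho>"
  defines "S \<equiv> {mu \<in> keys g. strictly_dominant mu} - {lam + \<rho>}"
  assumes lam: "lam \<in> P" "is_dominant lam"
  shows "g = alt R (lam + \<rho>) + (\<Sum>mu\<in>S. scal (lookup g mu) (alt R mu))"
proof -
  have "strictly_dominant (lam + \<rho>)"
    using lam(2) rho_inner_simple_pos
    by (auto simp: strictly_dominant_def is_dominant_def inner_add_left add_nonneg_pos)
  then have top: "lam + \<rho> \<in> {mu \<in> keys g. strictly_dominant mu}"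
    using lookup_orbit_sum_alt_top[OF lam] by (simp add: g_def in_keys_iff)
  have "g = (\<Sum>mu\<in>{mu \<in> keys g. strictly_dominant mu}. scal (lookup g mu) (alt R mu))"
    unfolding g_def by (intro alternating_decomp alternating_mult W_invariant_orbit_sum alternating_alt)
  also have "\<dots> = scal (lookup g (lam + \<rho>)) (alt R (lam + \<rho>)) + (\<Sum>mu\<in>S. scal (lookup g mu) (alt R mu))"
    unfolding S_def by (rule sum.remove[OF _ top]) simp
  also have "lookup g (lam + \<rho>) = 1" unfolding g_def by (rule lookup_orbit_sum_alt_top[OF lam])
  finally show ?thesis by simp
qed

lemma char_solution_step:
  fixes lam :: "real^'n" and C :: "real^'n \<Rightarrow> 'n gring"
  defines "g \<equiv> orbit_sum lam * alt R \<rho>"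
  defines "S \<equiv> {mu \<in> keys g. strictly_dominant mu} - {lam + \<rho>}"
  assumes lam: "lam \<in> P" "is_dominant lam"
    and C: "\<And>mu. mu \<in> S \<Longrightarrow> char_solution (mu - \<rho>) (C mu)"
  shows "char_solution lam (orbit_sum lam - (\<Sum>mu\<in>S. scal (lookup g mu) (C mu)))"
    (is "char_solution lam ?chi")
proof -
  have "g = alt R (lam + \<rho>) + (\<Sum>mu\<in>S. scal (lookup g mu) (alt R mu))"
    unfolding g_def S_def by (rule orbit_sum_alt_decomp[OF lam])
  also have "(\<Sum>mu\<in>S. scal (lookup g mu) (alt R mu)) = (\<Sum>mu\<in>S. scal (lookup g mu) (C mu * alt R \<rho>))"
    using C by (intro sum.cong) (auto simp: char_solution_def)
  finally have g_eq: "g = alt R (lam + \<rho>) + (\<Sum>mu\<in>S. scal (lookup g mu) (C mu * alt R \<rho>))" .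
  have "?chi * alt R \<rho> = g - (\<Sum>mu\<in>S. scal (lookup g mu) (C mu * alt R \<rho>))"
    by (simp add: g_def left_diff_distrib sum_distrib_right scal_mult2)
  also have "\<dots> = alt R (lam + \<rho>)"
    unfolding diff_eq_eq by (rule g_eq)
  finally have "?chi * alt R \<rho> = alt R (lam + \<rho>)" .
  moreover have "W_invariant ?chi"
    using C by (intro W_invariant_diff W_invariant_orbit_sum W_invariant_sum W_invariant_scal)
      (auto simp: char_solution_def)
  moreover have "k - lam \<in> Q" if k: "k \<in> keys ?chi" for k
  proof -
    have "k \<in> keys (orbit_sum lam) \<or> (\<exists>mu\<in>S. k \<in> keys (C mu))"
      using subsetD[OF keys_diff_sum_scal_subset k] by blast
    then show ?thesis
    proof
      assume "k \<in> keys (orbit_sum lam)"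
      then have "lam - k \<in> Qplus" using keys_orbit_sum dominant_sub_orbit_Qplus[OF lam] by blast
      then show ?thesis using Q_uminus by (force simp: Qplus_def)
    next
      assume "\<exists>mu\<in>S. k \<in> keys (C mu)"
      then obtain mu where mu: "mu \<in> S" "k \<in> keys (C mu)" by blast
      have "k - (mu - \<rho>) \<in> Q" using C[OF mu(1)] mu(2) unfolding char_solution_def by blast
      moreover have "lam - (mu - \<rho>) \<in> Q"
        using strictly_dominant_keys_orbit_sum_alt(3)[OF lam] mu(1) by (auto simp: S_def g_def Qplus_def)
      ultimately show ?thesis using Q_diff by force
    qed
  qed
  ultimately show ?thesis unfolding char_solution_def by blast
qed

lemma char_solution_exists: "lam \<in> P \<Longrightarrow> is_dominant lam \<Longrightarrow> \<exists>chi. char_solution lam chi"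
proof (induction "rho_level lam" arbitrary: lam rule: less_induct)
  case less
  let ?S = "{mu \<in> keys (orbit_sum lam * alt R \<rho>). strictly_dominant mu} - {lam + \<rho>}"
  have "\<exists>chi. char_solution (mu - \<rho>) chi" if mu: "mu \<in> ?S" for mu
  proof -
    have lower: "mu - \<rho> \<in> P" "is_dominant (mu - \<rho>)" "lam - (mu - \<rho>) \<in> Qplus"
      using strictly_dominant_keys_orbit_sum_alt[OF less.prems] mu by auto
    moreover have "mu - \<rho> \<noteq> lam" using mu by auto
    ultimately have "rho_level (mu - \<rho>) < rho_level lam" using rho_level_less by blast
    then show ?thesis using less.hyps lower by blast
  qed
  then obtain C where "\<forall>mu\<in>?S. char_solution (mu - \<rho>) (C mu)"
    using bchoice[of ?S "\<lambda>mu chi. char_solution (mu - \<rho>) chi"] by blast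
  then show ?case using char_solution_step[OF less.prems, of C] by blast
qed

lemma character_char_solution: "lam \<in> P \<Longrightarrow> is_dominant lam \<Longrightarrow> char_solution lam (character R D lam)"
proof -
  assume "lam \<in> P" "is_dominant lam"
  then obtain chi where chi: "char_solution lam chi" using char_solution_exists by blast
  then have "character R D lam = chi" using character_eq unfolding char_solution_def by blast
  then show ?thesis using chi by simp
qed


section \<open>The image of the halving map\<close>

definition Psi_invariant :: "'n gring \<Rightarrow> bool" where
  "Psi_invariant f \<longleftrightarrow> W_invariant f \<and> (\<forall>k\<in>keys f. k \<in> P \<and> 2 *\<^sub>R k \<in> Q)"

lemma Psi_invariant_add: "Psi_invariant f \<Longrightarrow> Psi_invariant g \<Longrightarrow> Psi_invariant (f + g)"
  unfolding Psi_invariant_def using keys_add_subset[of f g] by (auto simp: W_invariant_add)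

lemma Psi_invariant_scal: "Psi_invariant f \<Longrightarrow> Psi_invariant (scal c f)"
  unfolding Psi_invariant_def using keys_scal[of c f] by (auto simp: W_invariant_scal)

lemma Psi_invariant_zero: "Psi_invariant 0" by (simp add: Psi_invariant_def W_invariant_zero)

lemma Psi_invariant_sum: "(\<And>i. i \<in> I \<Longrightarrow> Psi_invariant (F i)) \<Longrightarrow> Psi_invariant (sum F I)"
  by (induction I rule: infinite_finite_induct) (auto simp: Psi_invariant_zero Psi_invariant_add)

lemma Psi_iff: "lam \<in> Psi R D \<longleftrightarrow> lam \<in> P \<and> is_dominant lam \<and> 2 *\<^sub>R lam \<in> Q"
  by (auto simp: Psi_def dominant_def is_dominant_def)

lemma Psi_invariant_character:
  assumes lam: "lam \<in> Psi R D"
  shows "Psi_invariant (character R D lam)"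
  unfolding Psi_invariant_def
proof (intro conjI ballI)
  have lam': "lam \<in> P" "is_dominant lam" "2 *\<^sub>R lam \<in> Q" using lam Psi_iff by auto
  have chi: "char_solution lam (character R D lam)" using lam'(1,2) by (rule character_char_solution)
  then show "W_invariant (character R D lam)" unfolding char_solution_def by blast
  fix k assume "k \<in> keys (character R D lam)"
  then have k: "k - lam \<in> Q" using chi unfolding char_solution_def by blast
  show "k \<in> P" using P_add[OF Q_P[OF k] lam'(1)] by simp
  have "2 *\<^sub>R (k - lam) \<in> Q" using Q_scale_Ints[OF k, of 2] by simp
  moreover have "2 *\<^sub>R k = 2 *\<^sub>R (k - lam) + 2 *\<^sub>R lam" by (simp add: algebra_simps)
  ultimately show "2 *\<^sub>R k \<in> Q" using Q_add[OF _ lam'(3)] by metis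
qed

lemma cspan_Psi_invariant: "x \<in> cspan (character R D ` Psi R D) \<Longrightarrow> Psi_invariant x"
  unfolding cspan_def using Psi_invariant_character
  by (auto intro!: Psi_invariant_sum Psi_invariant_scal)

lemma strictly_dominant_keys_mult_alt_Psi:
  assumes f: "Psi_invariant f" and mu: "mu \<in> keys (f * alt R \<rho>)" "strictly_dominant mu"
  shows "mu - \<rho> \<in> Psi R D"
proof -
  have "mu \<in> {k + b |k b. k \<in> keys f \<and> b \<in> keys (alt R \<rho>)}"
    using keys_mult mu(1) by (rule subsetD)
  then obtain k b where k: "k \<in> keys f" and b: "b \<in> orbit \<rho>" and mu_eq: "mu = k + b"
    using keys_alt by blast
  have k': "k \<in> P" "2 *\<^sub>R k \<in> Q" using f k unfolding Psi_invariant_def by auto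
  have "mu \<in> P" using P_add[OF k'(1) orbit_P[OF rho_P b]] mu_eq by simp
  moreover have "2 *\<^sub>R (mu - \<rho>) \<in> Q"
  proof -
    have "\<rho> - b \<in> Q" using dominant_sub_orbit_Qplus[OF rho_P dominant_rho b] by (simp add: Qplus_def)
    then have "2 *\<^sub>R k - 2 *\<^sub>R (\<rho> - b) \<in> Q" using Q_diff[OF k'(2) Q_scale_Ints] by simp
    moreover have "2 *\<^sub>R (mu - \<rho>) = 2 *\<^sub>R k - 2 *\<^sub>R (\<rho> - b)" using mu_eq by (simp add: algebra_simps)
    ultimately show ?thesis by simp
  qed
  ultimately show ?thesis using Psi_iff P_diff[OF _ rho_P] strictly_dominant_sub_rho mu(2) by blast
qed

lemma Psi_invariant_cspan:
  assumes f: "Psi_invariant f"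
  shows "f \<in> cspan (character R D ` Psi R D)"
proof -
  define S where "S = {mu \<in> keys (f * alt R \<rho>). strictly_dominant mu}"
  define h where "h = (\<Sum>mu\<in>S. scal (lookup (f * alt R \<rho>) mu) (character R D (mu - \<rho>)))"
  have Psi: "mu - \<rho> \<in> Psi R D" if "mu \<in> S" for mu
    using strictly_dominant_keys_mult_alt_Psi[OF f] that unfolding S_def by blast
  have "h * alt R \<rho> = (\<Sum>mu\<in>S. scal (lookup (f * alt R \<rho>) mu) (alt R mu))"
    unfolding h_def sum_distrib_right scal_mult2
    using Psi character_char_solution Psi_iff by (intro sum.cong) (auto simp: char_solution_def)
  also have "\<dots> = f * alt R \<rho>"
    using f unfolding S_def Psi_invariant_def
    by (intro alternating_decomp[symmetric] alternating_mult alternating_alt) blast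
  finally have "(f - h) * alt R \<rho> = 0" by (simp add: left_diff_distrib)
  then have "f = h" using alt_rho_cancel[of "f - h"] by simp
  also have "h \<in> cspan (character R D ` Psi R D)"
    unfolding h_def using Psi by (intro cspan_sum) (auto simp: S_def)
  finally show ?thesis .
qed

lemma even_lattice_iff: "v \<in> even_lattice R \<longleftrightarrow> v \<in> Q \<and> (1/2) *\<^sub>R v \<in> P"
  unfolding even_lattice_def by (auto intro: image_eqI[where x = "(1/2) *\<^sub>R v"])

lemma W_invariant_halve_keys: "W_invariant (halve_keys x) \<longleftrightarrow> W_invariant x"
proof -
  have "(\<forall>v. lookup x (2 *\<^sub>R w v) = lookup x (2 *\<^sub>R v)) \<longleftrightarrow> (\<forall>u. lookup x (w u) = lookup x u)"
    if w: "w \<in> W" for w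
  proof
    assume h: "\<forall>v. lookup x (2 *\<^sub>R w v) = lookup x (2 *\<^sub>R v)"
    show "\<forall>u. lookup x (w u) = lookup x u"
    proof
      fix u show "lookup x (w u) = lookup x u"
        using h[rule_format, of "(1/2) *\<^sub>R u"] by (simp add: W_scale[OF w, symmetric])
    qed
  qed (simp add: W_scale[OF w, symmetric])
  then show ?thesis unfolding W_invariant_def lookup_halve_keys by (rule ball_cong[OF refl])
qed

lemma U0ev_W_iff: "x \<in> U0ev_W R \<longleftrightarrow> W_invariant x \<and> keys x \<subseteq> even_lattice R"
  by (auto simp: U0ev_W_def W_invariant_def)

lemma Psi_invariant_halve_keys: "Psi_invariant (halve_keys x) \<longleftrightarrow> x \<in> U0ev_W R"
  by (auto simp: Psi_invariant_def U0ev_W_iff W_invariant_halve_keys keys_halve_keys even_lattice_iff)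

lemma halve_keys_image: "halve_keys ` U0ev_W R = cspan (character R D ` Psi R D)"
proof -
  have "halve_keys ` U0ev_W R = {f. Psi_invariant f}"
  proof
    show "halve_keys ` U0ev_W R \<subseteq> {f. Psi_invariant f}" using Psi_invariant_halve_keys by blast
    show "{f. Psi_invariant f} \<subseteq> halve_keys ` U0ev_W R"
    proof
      fix f assume "f \<in> {f. Psi_invariant f}"
      then have "double_keys f \<in> U0ev_W R"
        using Psi_invariant_halve_keys[of "double_keys f"] by (simp add: halve_double_keys)
      then show "f \<in> halve_keys ` U0ev_W R" using halve_double_keys by (metis image_eqI)
    qed
  qed
  then show ?thesis using Psi_invariant_cspan cspan_Psi_invariant by blast
qed

lemma halve_keys_orbit: "a \<in> even_lattice R \<Longrightarrow>
   halve_keys (\<Sum>w\<in>W. gexp (w a)) = (\<Sum>w\<in>W. gexp (w ((1/2) *\<^sub>R a)))"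
  unfolding halve_keys_def gexp_def by (simp add: pushforward_sum W_scale)

lemma halve_keys_rep_ring: "x \<in> U0ev_W R \<Longrightarrow> halve_keys x \<in> rep_ring R D"
proof -
  assume "x \<in> U0ev_W R"
  then have "halve_keys x \<in> cspan (character R D ` Psi R D)" using halve_keys_image by blast
  moreover have "Psi R D \<subseteq> dominant R D" unfolding Psi_def by blast
  then have "cspan (character R D ` Psi R D) \<subseteq> rep_ring R D"
    unfolding rep_ring_def by (intro cspan_mono image_mono)
  ultimately show ?thesis by blast
qed

end

theorem lemma3p3:
  fixes R D :: "(real^'n::finite) set"
  assumes "root_system R" and "irreducible_rs R" and "is_base R D"
  shows "\<exists>\<theta> :: 'n gring \<Rightarrow> 'n gring.
     (\<forall>x\<in>U0ev_W R. \<theta> x \<in> rep_ring R D) \<and>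
     (\<forall>x\<in>U0ev_W R. \<forall>y\<in>U0ev_W R. \<theta> (x + y) = \<theta> x + \<theta> y) \<and>
     (\<forall>x\<in>U0ev_W R. \<forall>y\<in>U0ev_W R. \<theta> (x * y) = \<theta> x * \<theta> y) \<and>
     (\<forall>c. \<forall>x\<in>U0ev_W R. \<theta> (scal c x) = scal c (\<theta> x)) \<and>
     \<theta> 1 = 1 \<and>
     inj_on \<theta> (U0ev_W R) \<and>
     (\<forall>a\<in>even_lattice R.
        \<theta> (\<Sum>w\<in>weyl_group R. gexp (w a)) = (\<Sum>w\<in>weyl_group R. gexp (w ((1/2) *\<^sub>R a)))) \<and>
     \<theta> ` U0ev_W R = cspan (character R D ` Psi R D)"
proof -
  interpret based_root_system R D using assms(1,3) by unfold_locales
  show ?thesis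
    using halve_keys_rep_ring halve_keys_add halve_keys_mult halve_keys_scal halve_keys_one
      inj_on_subset[OF inj_halve_keys] halve_keys_orbit halve_keys_image
    by (intro exI[of _ halve_keys]) blast
qed

end
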